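(* Let $(X,\kappa)$ be a finite digital image and $f:X\to X$ a continuous self-map with $L(f)\neq 0$. Then there is a simplex $\sigma\subseteq X$ (a nonempty set of pairwise adjacent points) with $f(\sigma)=\sigma$.
   Context: A digital image is a pair $(X,\kappa)$ where $X$ is a set and $\kappa$ is a symmetric irreflexive relation on $X$ (the adjacency). Write $x\leftrightarrow y$ if adjacent, $x\Leftrightarrow y$ if adjacent or equal. A map $f$ is continuous if $x\leftrightarrow y$ implies $f(x)\Leftrightarrow f(y)$. Simplicial homology: a $q$-simplex of $X$ is a set of $q+1$ pairwise adjacent points. $C_q(X)$ is the free abelian group generated by ordered $q$-simplices $\langle x_0,\dots,x_q\rangle$ modulo $\langle x_{\rho(0)},\dots,x_{\rho(q)}\rangle=\operatorname{sgn}(\rho)\langle x_0,\dots,x_q\rangle$, with boundary $\partial\langle x_0,\dots,x_q\rangle=\sum_{i=0}^q(-1)^i\langle x_0,\dots,\widehat{x_i},\dots,x_q\rangle$; $H_q(X)$ is its homology. For continuous $f$, $f_q\langle p_0,\dots,p_q\rangle=\langle f(p_0),\dots,f(p_q)\rangle$ (interpreted as $0$ if the image has fewer than $q+1$ points); this is a chain map inducing $f_{*,q}$ on $H_q$. The simplicial Lefschetz number of a self-map $f$ of a finite image is $L(f)=\sum_{q\ge0}(-1)^q\operatorname{tr}(f_{*,q})$, traces taken on $H_q(X)\otimes\mathbb Q$. *)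

theory Defs
  imports Complex_Main "HOL-Combinatorics.Permutations"
begin

text \<open>Chains with rational coefficients are modelled as alternating rational-valued functions
on ordered simplices (lists of distinct pairwise adjacent points); this is C_q(X) tensor Q.\<close>

definition digital_image :: "'a set \<Rightarrow> ('a \<Rightarrow> 'a \<Rightarrow> bool) \<Rightarrow> bool" where
  "digital_image X adj \<longleftrightarrow>
     (\<forall>x\<in>X. \<forall>y\<in>X. adj x y \<longrightarrow> adj y x) \<and> (\<forall>x\<in>X. \<not> adj x x)"

definition dcontinuous :: "'a set \<Rightarrow> ('a \<Rightarrow> 'a \<Rightarrow> bool) \<Rightarrow> ('a \<Rightarrow> 'a) \<Rightarrow> bool" where
  "dcontinuous X adj f \<longleftrightarrow> f ` X \<subseteq> X \<and>
     (\<forall>x\<in>X. \<forall>y\<in>X. adj x y \<longrightarrow> (f x = f y \<or> adj (f x) (f y)))"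

definition is_simplex :: "'a set \<Rightarrow> ('a \<Rightarrow> 'a \<Rightarrow> bool) \<Rightarrow> 'a set \<Rightarrow> bool" where
  "is_simplex X adj \<sigma> \<longleftrightarrow> \<sigma> \<noteq> {} \<and> \<sigma> \<subseteq> X \<and> (\<forall>x\<in>\<sigma>. \<forall>y\<in>\<sigma>. x \<noteq> y \<longrightarrow> adj x y)"

definition osimplex :: "'a set \<Rightarrow> ('a \<Rightarrow> 'a \<Rightarrow> bool) \<Rightarrow> nat \<Rightarrow> 'a list \<Rightarrow> bool" where
  "osimplex X adj q s \<longleftrightarrow> length s = Suc q \<and> distinct s \<and> set s \<subseteq> X \<and>
     (\<forall>x\<in>set s. \<forall>y\<in>set s. x \<noteq> y \<longrightarrow> adj x y)"

definition permute_list_by :: "(nat \<Rightarrow> nat) \<Rightarrow> 'a list \<Rightarrow> 'a list" where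
  "permute_list_by p s = map (\<lambda>i. s ! p i) [0..<length s]"

definition chains :: "'a set \<Rightarrow> ('a \<Rightarrow> 'a \<Rightarrow> bool) \<Rightarrow> nat \<Rightarrow> ('a list \<Rightarrow> rat) set" where
  "chains X adj q = {c. (\<forall>s. \<not> osimplex X adj q s \<longrightarrow> c s = 0) \<and>
     (\<forall>s p. osimplex X adj q s \<longrightarrow> p permutes {..<Suc q} \<longrightarrow>
        c (permute_list_by p s) = of_int (sign p) * c s)}"

text \<open>the chain corresponding to the generator <x_0,...,x_q>\<close>
definition gen :: "'a list \<Rightarrow> 'a list \<Rightarrow> rat" where
  "gen s t = (if \<exists>p. p permutes {..<length s} \<and> t = permute_list_by p s
              then of_int (sign (SOME p. p permutes {..<length s} \<and> t = permute_list_by p s))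
              else 0)"

definition del_nth :: "nat \<Rightarrow> 'a list \<Rightarrow> 'a list" where
  "del_nth i s = take i s @ drop (Suc i) s"

text \<open>boundary C_q \<rightarrow> C_{q-1} (for q > 0), linear extension of
  <x_0..x_q> \<mapsto> sum_i (-1)^i <x_0..^x_i..x_q>; each unordered simplex occurs (q+1)! times\<close>
definition bdry :: "'a set \<Rightarrow> ('a \<Rightarrow> 'a \<Rightarrow> bool) \<Rightarrow> nat \<Rightarrow> ('a list \<Rightarrow> rat) \<Rightarrow> ('a list \<Rightarrow> rat)" where
  "bdry X adj q c = (\<lambda>t. \<Sum>s\<in>{s. osimplex X adj q s}.
      c s / of_nat (fact (Suc q)) * (\<Sum>i<Suc q. (-1) ^ i * gen (del_nth i s) t))"

definition cycles :: "'a set \<Rightarrow> ('a \<Rightarrow> 'a \<Rightarrow> bool) \<Rightarrow> nat \<Rightarrow> ('a list \<Rightarrow> rat) set" where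
  "cycles X adj q = {c \<in> chains X adj q. q = 0 \<or> bdry X adj q c = (\<lambda>_. 0)}"

definition boundaries :: "'a set \<Rightarrow> ('a \<Rightarrow> 'a \<Rightarrow> bool) \<Rightarrow> nat \<Rightarrow> ('a list \<Rightarrow> rat) set" where
  "boundaries X adj q = bdry X adj (Suc q) ` chains X adj (Suc q)"

text \<open>induced chain map f_q, linear extension of <p_0..p_q> \<mapsto> <f p_0..f p_q> (0 if degenerate)\<close>
definition chain_map :: "'a set \<Rightarrow> ('a \<Rightarrow> 'a \<Rightarrow> bool) \<Rightarrow> ('a \<Rightarrow> 'a) \<Rightarrow> nat \<Rightarrow> ('a list \<Rightarrow> rat) \<Rightarrow> ('a list \<Rightarrow> rat)" where
  "chain_map X adj f q c = (\<lambda>t. \<Sum>s\<in>{s. osimplex X adj q s}.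
      c s / of_nat (fact (Suc q)) * (if distinct (map f s) then gen (map f s) t else 0))"

definition lin_comb :: "('b \<Rightarrow> rat) list \<Rightarrow> (nat \<Rightarrow> rat) \<Rightarrow> ('b \<Rightarrow> rat)" where
  "lin_comb hs a = (\<lambda>t. \<Sum>i<length hs. a i * (hs ! i) t)"

text \<open>hs is a list of representatives of a basis of the quotient space Z/B\<close>
definition quot_basis :: "('b \<Rightarrow> rat) set \<Rightarrow> ('b \<Rightarrow> rat) set \<Rightarrow> ('b \<Rightarrow> rat) list \<Rightarrow> bool" where
  "quot_basis Z B hs \<longleftrightarrow> set hs \<subseteq> Z \<and>
     (\<forall>z\<in>Z. \<exists>a. (\<lambda>t. z t - lin_comb hs a t) \<in> B) \<and>
     (\<forall>a. lin_comb hs a \<in> B \<longrightarrow> (\<forall>i<length hs. a i = 0))"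

definition quot_trace :: "('b \<Rightarrow> rat) set \<Rightarrow> ('b \<Rightarrow> rat) set \<Rightarrow> (('b \<Rightarrow> rat) \<Rightarrow> ('b \<Rightarrow> rat)) \<Rightarrow> rat" where
  "quot_trace Z B g = (let hs = (SOME hs. quot_basis Z B hs);
      A = (\<lambda>i. SOME a. (\<lambda>t. g (hs ! i) t - lin_comb hs a t) \<in> B)
    in \<Sum>i<length hs. A i i)"

text \<open>simplicial Lefschetz number; H_q = 0 for q \<ge> card X since there are no q-simplices\<close>
definition lefschetz :: "'a set \<Rightarrow> ('a \<Rightarrow> 'a \<Rightarrow> bool) \<Rightarrow> ('a \<Rightarrow> 'a) \<Rightarrow> rat" where
  "lefschetz X adj f = (\<Sum>q<card X. (-1) ^ q *
      quot_trace (cycles X adj q) (boundaries X adj q) (chain_map X adj f q))"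

end

theory Submission
  imports Defs
begin

text \<open>This is the classical Hopf trace argument. Along the flag 0 \<subseteq> B_q \<subseteq> Z_q \<subseteq> C_q of
  f-invariant subspaces (boundaries, cycles, chains) the trace of f_q on C_q splits as
  tr(C_q/Z_q) + tr(H_q) + tr(B_q), and the boundary map identifies C_{q+1}/Z_{q+1} with B_q
  compatibly with f. In the alternating sum these two contributions telescope, so L(f) is the
  alternating sum of the traces of f_q on the chain spaces. In the basis of C_q given by one
  ordering of each q-simplex, the diagonal entry at a simplex \<sigma> can only be nonzero if
  f(\<sigma>) = \<sigma>; hence without an invariant simplex all these traces vanish.\<close>

section \<open>Traces on quotients of spaces of rational functions\<close>

definition lin_subspace :: "('b \<Rightarrow> rat) set \<Rightarrow> bool" where
  "lin_subspace S \<longleftrightarrow> (\<lambda>_. 0) \<in> S \<and> (\<forall>x\<in>S. \<forall>y\<in>S. (\<lambda>t. x t + y t) \<in> S) \<and>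
     (\<forall>c. \<forall>x\<in>S. (\<lambda>t. c * x t) \<in> S)"

definition lin_map :: "(('b \<Rightarrow> rat) \<Rightarrow> ('c \<Rightarrow> rat)) \<Rightarrow> bool" where
  "lin_map g \<longleftrightarrow> (\<forall>x y. g (\<lambda>t. x t + y t) = (\<lambda>t. g x t + g y t)) \<and>
     (\<forall>c x. g (\<lambda>t. c * x t) = (\<lambda>t. c * g x t))"

lemma lin_subspace_zero: "lin_subspace S \<Longrightarrow> (\<lambda>_. 0) \<in> S"
  and lin_subspace_add: "lin_subspace S \<Longrightarrow> x \<in> S \<Longrightarrow> y \<in> S \<Longrightarrow> (\<lambda>t. x t + y t) \<in> S"
  and lin_subspace_scale: "lin_subspace S \<Longrightarrow> x \<in> S \<Longrightarrow> (\<lambda>t. c * x t) \<in> S"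
  by (simp_all add: lin_subspace_def)

lemma lin_subspace_diff:
  assumes "lin_subspace S" "x \<in> S" "y \<in> S"
  shows "(\<lambda>t. x t - y t) \<in> S"
  using lin_subspace_add[OF assms(1,2) lin_subspace_scale[OF assms(1,3), of "-1"]] by simp

lemma lin_subspace_sum:
  fixes n :: nat
  assumes "lin_subspace S" "\<And>j. j < n \<Longrightarrow> b j \<in> S"
  shows "(\<lambda>t. \<Sum>j<n. \<beta> j * b j t) \<in> S"
  using assms(2)
proof (induction n)
  case 0
  then show ?case using lin_subspace_zero[OF assms(1)] by simp
next
  case (Suc n)
  have "(\<lambda>t. (\<Sum>j<n. \<beta> j * b j t) + \<beta> n * b n t) \<in> S"
    using Suc
    by (intro lin_subspace_add[OF assms(1), of "\<lambda>t. \<Sum>j<n. _ j t"] lin_subspace_scale[OF assms(1)])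
      auto
  then show ?case by simp
qed

lemma lin_subspace_singleton_zero: "lin_subspace {\<lambda>_. 0}"
  unfolding lin_subspace_def by simp

lemma lin_map_add: "lin_map g \<Longrightarrow> g (\<lambda>t. x t + y t) = (\<lambda>t. g x t + g y t)"
  and lin_map_scale: "lin_map g \<Longrightarrow> g (\<lambda>t. c * x t) = (\<lambda>t. c * g x t)"
  by (simp_all add: lin_map_def)

lemma lin_map_zero: "lin_map g \<Longrightarrow> g (\<lambda>_. 0) = (\<lambda>_. 0)"
  using lin_map_scale[of g 0 "\<lambda>_. 0"] by simp

lemma lin_map_diff: "lin_map g \<Longrightarrow> g (\<lambda>t. x t - y t) = (\<lambda>t. g x t - g y t)"
  using lin_map_add[of g x "\<lambda>t. (-1) * y t"] lin_map_scale[of g "-1" y] by simp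

lemma lin_map_sum:
  fixes n :: nat
  assumes "lin_map g"
  shows "g (\<lambda>t. \<Sum>j<n. \<beta> j * b j t) = (\<lambda>t. \<Sum>j<n. \<beta> j * g (b j) t)"
proof (induction n)
  case 0
  then show ?case using lin_map_zero[OF assms] by simp
next
  case (Suc n)
  have "g (\<lambda>t. (\<Sum>j<n. \<beta> j * b j t) + \<beta> n * b n t) =
      (\<lambda>t. g (\<lambda>t. \<Sum>j<n. \<beta> j * b j t) t + g (\<lambda>t. \<beta> n * b n t) t)"
    by (rule lin_map_add[OF assms])
  then show ?case using Suc lin_map_scale[OF assms] by simp
qed

lemma lin_subspace_image:
  assumes "lin_subspace U" "lin_map d"
  shows "lin_subspace (d ` U)"
  unfolding lin_subspace_def
proof (intro conjI ballI allI)
  show "(\<lambda>_. 0) \<in> d ` U"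
    using lin_map_zero[OF assms(2)] lin_subspace_zero[OF assms(1)] by (metis image_eqI)
next
  fix x y assume "x \<in> d ` U" "y \<in> d ` U"
  then obtain u v where "u \<in> U" "v \<in> U" "x = d u" "y = d v" by blast
  then show "(\<lambda>t. x t + y t) \<in> d ` U"
    using lin_map_add[OF assms(2), of u v] lin_subspace_add[OF assms(1)] by (metis image_eqI)
next
  fix c x assume "x \<in> d ` U"
  then obtain u where "u \<in> U" "x = d u" by blast
  then show "(\<lambda>t. c * x t) \<in> d ` U"
    using lin_map_scale[OF assms(2), of c u] lin_subspace_scale[OF assms(1)] by (metis image_eqI)
qed

lemma lin_comb_in_subspace: "lin_subspace S \<Longrightarrow> set hs \<subseteq> S \<Longrightarrow> lin_comb hs a \<in> S"
  unfolding lin_comb_def by (rule lin_subspace_sum) auto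

lemma lin_map_lin_comb: "lin_map g \<Longrightarrow> g (lin_comb hs a) = lin_comb (map g hs) a"
  unfolding lin_comb_def by (simp add: lin_map_sum)

lemma lin_comb_diff: "lin_comb hs (\<lambda>i. a i - b i) = (\<lambda>t. lin_comb hs a t - lin_comb hs b t)"
  by (simp add: lin_comb_def left_diff_distrib sum_subtractf)

lemma lin_comb_cong: "(\<And>i. i < length hs \<Longrightarrow> a i = b i) \<Longrightarrow> lin_comb hs a = lin_comb hs b"
  unfolding lin_comb_def by (intro ext sum.cong) auto

lemma lin_comb_zero: "(\<And>i. i < length hs \<Longrightarrow> a i = 0) \<Longrightarrow> lin_comb hs a = (\<lambda>_. 0)"
  unfolding lin_comb_def by (intro ext sum.neutral) auto

lemma lin_comb_unit: "l < length hs \<Longrightarrow> lin_comb hs (\<lambda>i. if i = l then 1 else 0) = hs ! l"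
  unfolding lin_comb_def by (simp add: if_distrib[of "\<lambda>x. x * _"] cong: if_cong)

lemma sum_lessThan_add:
  fixes F :: "nat \<Rightarrow> 'c::comm_monoid_add"
  shows "(\<Sum>i<m + n. F i) = (\<Sum>i<m. F i) + (\<Sum>j<n. F (m + j))"
  by (induction n) (simp_all add: add_ac)

lemma lin_comb_append:
  "lin_comb (hs @ ks) c = (\<lambda>t. lin_comb hs c t + lin_comb ks (\<lambda>j. c (length hs + j)) t)"
  unfolding lin_comb_def by (simp add: sum_lessThan_add nth_append)

lemma lin_comb_Cons: "lin_comb (h # hs) a = (\<lambda>t. a 0 * h t + lin_comb hs (\<lambda>i. a (Suc i)) t)"
  unfolding lin_comb_def length_Cons sum.lessThan_Suc_shift by simp

definition quot_coords ::
    "('b \<Rightarrow> rat) set \<Rightarrow> ('b \<Rightarrow> rat) list \<Rightarrow> ('b \<Rightarrow> rat) \<Rightarrow> nat \<Rightarrow> rat" where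
  "quot_coords B hs v = (SOME a. (\<lambda>t. v t - lin_comb hs a t) \<in> B)"

definition trace_wrt ::
    "('b \<Rightarrow> rat) set \<Rightarrow> ('b \<Rightarrow> rat) list \<Rightarrow> (('b \<Rightarrow> rat) \<Rightarrow> ('b \<Rightarrow> rat)) \<Rightarrow> rat" where
  "trace_wrt B hs g = (\<Sum>i<length hs. quot_coords B hs (g (hs ! i)) i)"

lemma quot_basis_nth_mem: "quot_basis Z B hs \<Longrightarrow> i < length hs \<Longrightarrow> hs ! i \<in> Z"
  unfolding quot_basis_def by auto

lemma quot_coords_spec:
  assumes "quot_basis Z B hs" "v \<in> Z"
  shows "(\<lambda>t. v t - lin_comb hs (quot_coords B hs v) t) \<in> B"
proof -
  have "\<exists>a. (\<lambda>t. v t - lin_comb hs a t) \<in> B"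
    using assms unfolding quot_basis_def by blast
  then show ?thesis
    unfolding quot_coords_def by (rule someI_ex)
qed

lemma quot_coords_eqI:
  assumes qb: "quot_basis Z B hs" and sB: "lin_subspace B"
    and a: "(\<lambda>t. v t - lin_comb hs a t) \<in> B" and i: "i < length hs"
  shows "quot_coords B hs v i = a i"
proof -
  let ?c = "quot_coords B hs v"
  have c: "(\<lambda>t. v t - lin_comb hs ?c t) \<in> B"
    unfolding quot_coords_def by (rule someI[of _ a]) (rule a)
  have "(\<lambda>t. (v t - lin_comb hs a t) - (v t - lin_comb hs ?c t)) \<in> B"
    using lin_subspace_diff[OF sB a c] .
  then have "lin_comb hs (\<lambda>i. ?c i - a i) \<in> B" by (simp add: lin_comb_diff)
  then show ?thesis using qb i unfolding quot_basis_def by auto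
qed

lemma quot_coords_basis_vector:
  assumes "quot_basis Z B hs" "lin_subspace B" "l < length hs" "i < length hs"
  shows "quot_coords B hs (hs ! l) i = (if i = l then 1 else 0)"
  by (rule quot_coords_eqI[OF assms(1,2) _ assms(4)])
    (simp add: lin_comb_unit[OF assms(3)] lin_subspace_zero[OF assms(2)])

lemma quot_coords_of_sub:
  assumes "quot_basis U V hs" "lin_subspace V" "v \<in> V" "i < length hs"
  shows "quot_coords V hs v i = 0"
  by (rule quot_coords_eqI[OF assms(1,2) _ assms(4)]) (simp add: lin_comb_def assms(3))

lemma quot_coords_map:
  assumes qh: "quot_basis Z B hs" and qk: "quot_basis Z B ks" and sB: "lin_subspace B"
    and g: "lin_map g" "g ` Z \<subseteq> Z" "g ` B \<subseteq> B" and v: "v \<in> Z" and l: "l < length hs"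
  shows "quot_coords B hs (g v) l =
    (\<Sum>j<length ks. quot_coords B ks v j * quot_coords B hs (g (ks ! j)) l)"
proof -
  define c where "c = quot_coords B ks v"
  define d where "d j = quot_coords B hs (g (ks ! j))" for j
  define a where "a i = (\<Sum>j<length ks. c j * d j i)" for i
  let ?rv = "\<lambda>t. v t - lin_comb ks c t"
  let ?r = "\<lambda>j t. g (ks ! j) t - lin_comb hs (d j) t"
  have rv: "g ?rv \<in> B"
    using quot_coords_spec[OF qk v] g unfolding c_def by blast
  have r: "(\<lambda>t. \<Sum>j<length ks. c j * ?r j t) \<in> B"
    unfolding d_def
    by (rule lin_subspace_sum[OF sB], rule quot_coords_spec[OF qh])
      (use g quot_basis_nth_mem[OF qk] in blast)
  have "(\<lambda>t. g v t - lin_comb hs a t) = (\<lambda>t. g ?rv t + (\<Sum>j<length ks. c j * ?r j t))"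
  proof
    fix t
    have "lin_comb hs a t = (\<Sum>j<length ks. c j * lin_comb hs (d j) t)"
      unfolding lin_comb_def a_def
      by (simp add: sum_distrib_right sum_distrib_left mult.assoc sum.swap[where A="{..<length hs}"])
    moreover have "g ?rv t = g v t - (\<Sum>j<length ks. c j * g (ks ! j) t)"
      using lin_map_diff[OF g(1)] lin_map_lin_comb[OF g(1)] by (simp add: lin_comb_def)
    ultimately show "g v t - lin_comb hs a t = g ?rv t + (\<Sum>j<length ks. c j * ?r j t)"
      by (simp add: right_diff_distrib sum_subtractf)
  qed
  then have "(\<lambda>t. g v t - lin_comb hs a t) \<in> B"
    using lin_subspace_add[OF sB rv r] by simp
  then show ?thesis
    unfolding a_def c_def d_def by (rule quot_coords_eqI[OF qh sB _ l])
qed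

lemma trace_wrt_basis_independent:
  assumes qh: "quot_basis Z B hs" and qk: "quot_basis Z B ks" and sB: "lin_subspace B"
    and g: "lin_map g" "g ` Z \<subseteq> Z" "g ` B \<subseteq> B"
  shows "trace_wrt B ks g = trace_wrt B hs g"
proof -
  have id: "lin_map (\<lambda>x. x)" "(\<lambda>x. x) ` Z \<subseteq> Z" "(\<lambda>x. x) ` B \<subseteq> B"
    by (auto simp: lin_map_def)
  note base_change = quot_coords_map[OF _ _ sB id, simplified]
  note hsZ = quot_basis_nth_mem[OF qh] and ksZ = quot_basis_nth_mem[OF qk]
  let ?ch = "quot_coords B hs" and ?ck = "quot_coords B ks"
  have s1: "?ck (g (ks ! j)) j = (\<Sum>l<length hs. ?ch (g (ks ! j)) l * ?ck (hs ! l) j)"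
    if "j < length ks" for j
    using base_change[OF qk qh, of "g (ks ! j)" j] g(2) ksZ that by auto
  have s2: "?ch (g (ks ! j)) l = (\<Sum>i<length hs. ?ch (ks ! j) i * ?ch (g (hs ! i)) l)"
    if "j < length ks" "l < length hs" for j l
    using quot_coords_map[OF qh qh sB g, of "ks ! j" l] ksZ that by auto
  have s3: "(\<Sum>j<length ks. ?ck (hs ! l) j * ?ch (ks ! j) i) = (if l = i then 1 else 0)"
    if "i < length hs" "l < length hs" for i l
    using base_change[OF qh qk, of "hs ! l" i] hsZ that quot_coords_basis_vector[OF qh sB] by auto
  have "trace_wrt B ks g =
      (\<Sum>j<length ks. \<Sum>l<length hs. (\<Sum>i<length hs. ?ch (ks ! j) i * ?ch (g (hs ! i)) l) * ?ck (hs ! l) j)"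
    unfolding trace_wrt_def by (intro sum.cong refl) (simp add: s1 s2)
  also have "\<dots> = (\<Sum>l<length hs. \<Sum>i<length hs.
      ?ch (g (hs ! i)) l * (\<Sum>j<length ks. ?ck (hs ! l) j * ?ch (ks ! j) i))"
    by (subst sum.swap)
      (simp add: sum_distrib_left sum_distrib_right mult_ac sum.swap[where A="{..<length ks}"])
  also have "\<dots> = (\<Sum>l<length hs. \<Sum>i<length hs. ?ch (g (hs ! i)) l * (if l = i then 1 else 0))"
    by (intro sum.cong refl) (simp add: s3)
  also have "\<dots> = trace_wrt B hs g"
    unfolding trace_wrt_def by (simp add: if_distrib[where f="\<lambda>x. _ * x"] cong: if_cong)
  finally show ?thesis .
qed

lemma quot_trace_eq_trace_wrt:
  assumes "quot_basis Z B hs" "lin_subspace B" "lin_map g" "g ` Z \<subseteq> Z" "g ` B \<subseteq> B"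
  shows "quot_trace Z B g = trace_wrt B hs g"
proof -
  have "quot_basis Z B (SOME hs. quot_basis Z B hs)"
    using assms(1) by (rule someI)
  then show ?thesis
    unfolding quot_trace_def trace_wrt_def quot_coords_def Let_def
    using trace_wrt_basis_independent[OF assms(1) _ assms(2-5)] unfolding trace_wrt_def quot_coords_def
    by blast
qed

lemma quot_trace_self:
  assumes "lin_subspace Z" "lin_map g" "g ` Z \<subseteq> Z"
  shows "quot_trace Z Z g = 0"
proof -
  have "quot_basis Z Z []"
    unfolding quot_basis_def lin_comb_def using assms(1) by simp
  then show ?thesis
    using quot_trace_eq_trace_wrt assms by (fastforce simp: trace_wrt_def)
qed

lemma quot_basis_append:
  assumes sW: "lin_subspace W" and sV: "lin_subspace V" and WV: "W \<subseteq> V" and VU: "V \<subseteq> U"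
    and qh: "quot_basis U V hs" and qk: "quot_basis V W ks"
  shows "quot_basis U W (hs @ ks)"
    and "\<And>u i. u \<in> U \<Longrightarrow> i < length (hs @ ks) \<Longrightarrow> quot_coords W (hs @ ks) u i =
      (if i < length hs then quot_coords V hs u i
       else quot_coords W ks (\<lambda>t. u t - lin_comb hs (quot_coords V hs u) t) (i - length hs))"
proof -
  define cc where "cc u i = (if i < length hs then quot_coords V hs u i
      else quot_coords W ks (\<lambda>t. u t - lin_comb hs (quot_coords V hs u) t) (i - length hs))" for u i
  have span: "(\<lambda>t. u t - lin_comb (hs @ ks) (cc u) t) \<in> W" if u: "u \<in> U" for u
  proof -
    let ?r = "\<lambda>t. u t - lin_comb hs (quot_coords V hs u) t"
    have "(\<lambda>t. ?r t - lin_comb ks (quot_coords W ks ?r) t) \<in> W"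
      using quot_coords_spec[OF qk quot_coords_spec[OF qh u]] .
    moreover have "lin_comb hs (cc u) = lin_comb hs (quot_coords V hs u)"
      by (rule lin_comb_cong) (simp add: cc_def)
    ultimately show ?thesis by (simp add: lin_comb_append diff_diff_eq cc_def)
  qed
  have indep: "c i = 0" if c: "lin_comb (hs @ ks) c \<in> W" and i: "i < length (hs @ ks)" for c i
  proof -
    let ?c' = "\<lambda>j. c (length hs + j)"
    have kV: "lin_comb ks ?c' \<in> V"
      using lin_comb_in_subspace[OF sV] qk unfolding quot_basis_def by blast
    have "(\<lambda>t. (lin_comb hs c t + lin_comb ks ?c' t) - lin_comb ks ?c' t) \<in> V"
      using lin_subspace_diff[OF sV _ kV] c WV unfolding lin_comb_append by blast
    then have "lin_comb hs c \<in> V" by simp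
    then have c1: "\<forall>i<length hs. c i = 0" using qh unfolding quot_basis_def by blast
    then have "lin_comb ks ?c' \<in> W" using c lin_comb_zero[of hs c] unfolding lin_comb_append by simp
    then have c2: "\<forall>j<length ks. ?c' j = 0" using qk unfolding quot_basis_def by blast
    show ?thesis using c1 c2[rule_format, of "i - length hs"] i by (cases "i < length hs") auto
  qed
  have "set (hs @ ks) \<subseteq> U" using qh qk VU unfolding quot_basis_def by auto
  then show qb: "quot_basis U W (hs @ ks)"
    unfolding quot_basis_def using span indep by blast
  show "quot_coords W (hs @ ks) u i = cc u i" if "u \<in> U" "i < length (hs @ ks)" for u i
    using quot_coords_eqI[OF qb sW span[OF that(1)] that(2)] .
qed

lemma trace_wrt_append:
  assumes sW: "lin_subspace W" and sV: "lin_subspace V" and WV: "W \<subseteq> V" and VU: "V \<subseteq> U"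
    and qh: "quot_basis U V hs" and qk: "quot_basis V W ks"
    and g: "g ` U \<subseteq> U" "g ` V \<subseteq> V"
  shows "trace_wrt W (hs @ ks) g = trace_wrt V hs g + trace_wrt W ks g"
proof -
  note coords = quot_basis_append(2)[OF sW sV WV VU qh qk]
  have head: "quot_coords W (hs @ ks) (g (hs ! i)) i = quot_coords V hs (g (hs ! i)) i"
    if "i < length hs" for i
    using coords[of "g (hs ! i)" i] quot_basis_nth_mem[OF qh that] g that by auto
  have tail: "quot_coords W (hs @ ks) (g (ks ! j)) (length hs + j) = quot_coords W ks (g (ks ! j)) j"
    if "j < length ks" for j
  proof -
    have gv: "g (ks ! j) \<in> V" using g quot_basis_nth_mem[OF qk that] by auto
    have "lin_comb hs (quot_coords V hs (g (ks ! j))) = (\<lambda>_. 0)"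
      by (rule lin_comb_zero) (rule quot_coords_of_sub[OF qh sV gv])
    then show ?thesis using coords[of "g (ks ! j)" "length hs + j"] gv VU that by auto
  qed
  show ?thesis
    unfolding trace_wrt_def by (simp add: sum_lessThan_add nth_append head tail)
qed

lemma quot_trace_split:
  assumes sW: "lin_subspace W" and sV: "lin_subspace V" and WV: "W \<subseteq> V" and VU: "V \<subseteq> U"
    and qh: "quot_basis U V hs" and qk: "quot_basis V W ks"
    and g: "lin_map g" "g ` U \<subseteq> U" "g ` V \<subseteq> V" "g ` W \<subseteq> W"
  shows "quot_trace U W g = quot_trace U V g + quot_trace V W g"
proof -
  have "quot_trace U W g = trace_wrt W (hs @ ks) g"
    using quot_trace_eq_trace_wrt[OF quot_basis_append(1)[OF sW sV WV VU qh qk] sW g(1,2,4)] .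
  also have "\<dots> = trace_wrt V hs g + trace_wrt W ks g"
    using trace_wrt_append[OF sW sV WV VU qh qk g(2,3)] .
  finally show ?thesis
    using quot_trace_eq_trace_wrt[OF qh sV g(1-3)] quot_trace_eq_trace_wrt[OF qk sW g(1,3,4)]
    by simp
qed

lemma quot_basis_transport:
  assumes sU: "lin_subspace U" and sW': "lin_subspace W'" and WU: "W \<subseteq> U"
    and qh: "quot_basis U W hs" and d: "lin_map d"
    and dW: "\<And>u. u \<in> U \<Longrightarrow> d u \<in> W' \<longleftrightarrow> u \<in> W"
  shows "quot_basis (d ` U) W' (map d hs)"
    and "\<And>u i. u \<in> U \<Longrightarrow> i < length hs \<Longrightarrow>
      quot_coords W' (map d hs) (d u) i = quot_coords W hs u i"
proof -
  have hU: "set hs \<subseteq> U" using qh unfolding quot_basis_def by auto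
  have span: "(\<lambda>t. d u t - lin_comb (map d hs) (quot_coords W hs u) t) \<in> W'" if u: "u \<in> U" for u
  proof -
    have "d (\<lambda>t. u t - lin_comb hs (quot_coords W hs u) t) \<in> W'"
      using quot_coords_spec[OF qh u] dW WU by blast
    then show ?thesis by (simp add: lin_map_diff[OF d] lin_map_lin_comb[OF d])
  qed
  show qb: "quot_basis (d ` U) W' (map d hs)"
    unfolding quot_basis_def
  proof (intro conjI ballI allI impI)
    show "set (map d hs) \<subseteq> d ` U" using hU by auto
  next
    fix z assume "z \<in> d ` U"
    then show "\<exists>a. (\<lambda>t. z t - lin_comb (map d hs) a t) \<in> W'" using span by blast
  next
    fix a i assume a: "lin_comb (map d hs) a \<in> W'" and i: "i < length (map d hs)"
    have "lin_comb hs a \<in> W"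
      using dW[OF lin_comb_in_subspace[OF sU hU]] a by (simp add: lin_map_lin_comb[OF d])
    then show "a i = 0" using qh i unfolding quot_basis_def by auto
  qed
  show "quot_coords W' (map d hs) (d u) i = quot_coords W hs u i" if "u \<in> U" "i < length hs" for u i
    using quot_coords_eqI[OF qb sW' span[OF that(1)]] that by auto
qed

text \<open>The hypotheses say that \<open>d\<close> induces an isomorphism \<open>U/W \<cong> d(U)/W'\<close> intertwining
  \<open>g\<close> and \<open>g'\<close>.\<close>

lemma quot_trace_transport:
  assumes sU: "lin_subspace U" and sW: "lin_subspace W" and sW': "lin_subspace W'" and WU: "W \<subseteq> U"
    and qh: "quot_basis U W hs" and d: "lin_map d"
    and dW: "\<And>u. u \<in> U \<Longrightarrow> d u \<in> W' \<longleftrightarrow> u \<in> W"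
    and g: "lin_map g" "g ` U \<subseteq> U" "g ` W \<subseteq> W"
    and g': "lin_map g'" "g' ` W' \<subseteq> W'" and comm: "\<And>u. u \<in> U \<Longrightarrow> g' (d u) = d (g u)"
  shows "quot_trace (d ` U) W' g' = quot_trace U W g"
proof -
  note qb = quot_basis_transport[OF sU sW' WU qh d dW]
  have g'U: "g' ` d ` U \<subseteq> d ` U" using comm g(2) by auto
  have "quot_trace (d ` U) W' g' = trace_wrt W' (map d hs) g'"
    using quot_trace_eq_trace_wrt[OF qb(1) sW' g'(1) g'U g'(2)] .
  also have "\<dots> = trace_wrt W hs g"
    unfolding trace_wrt_def
    using quot_basis_nth_mem[OF qh] g(2) qb(2) comm by (intro sum.cong) auto
  finally show ?thesis
    using quot_trace_eq_trace_wrt[OF qh sW g] by simp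
qed

lemma quot_basis_pivot_in_sub:
  assumes sZ: "lin_subspace Z" and sB: "lin_subspace B" and BZ: "B \<subseteq> Z"
    and b: "b \<in> B" "b x = 1"
    and qh: "quot_basis {z\<in>Z. z x = 0} {b\<in>B. b x = 0} hs"
  shows "quot_basis Z B hs"
  unfolding quot_basis_def
proof (intro conjI ballI allI impI)
  show "set hs \<subseteq> Z" using qh unfolding quot_basis_def by auto
next
  fix z assume z: "z \<in> Z"
  have "(\<lambda>t. z t - z x * b t) \<in> {z\<in>Z. z x = 0}"
    using lin_subspace_diff[OF sZ z lin_subspace_scale[OF sZ]] b BZ by auto
  then obtain a where a: "(\<lambda>t. z t - z x * b t - lin_comb hs a t) \<in> {b\<in>B. b x = 0}"
    using qh unfolding quot_basis_def by auto
  have "(\<lambda>t. (z t - z x * b t - lin_comb hs a t) + z x * b t) \<in> B"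
    using a b sB by (intro lin_subspace_add lin_subspace_scale) auto
  then show "\<exists>a. (\<lambda>t. z t - lin_comb hs a t) \<in> B" by auto
next
  fix a i assume a: "lin_comb hs a \<in> B" and i: "i < length hs"
  have "lin_comb hs a \<in> {z\<in>Z. z x = 0}"
    using lin_comb_in_subspace[of "{z\<in>Z. z x = 0}" hs a] sZ qh
    unfolding lin_subspace_def quot_basis_def by auto
  then show "a i = 0" using a i qh unfolding quot_basis_def by auto
qed

lemma quot_basis_pivot:
  assumes sZ: "lin_subspace Z" and z: "z \<in> Z" "z x = 1" and B0: "\<forall>b\<in>B. b x = 0"
    and qh: "quot_basis {z\<in>Z. z x = 0} B hs"
  shows "quot_basis Z B (z # hs)"
  unfolding quot_basis_def
proof (intro conjI ballI allI impI)
  show "set (z # hs) \<subseteq> Z" using qh z unfolding quot_basis_def by auto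
next
  fix y assume y: "y \<in> Z"
  have "(\<lambda>t. y t - y x * z t) \<in> {z\<in>Z. z x = 0}"
    using lin_subspace_diff[OF sZ y lin_subspace_scale[OF sZ z(1)]] z by auto
  then obtain a where "(\<lambda>t. y t - y x * z t - lin_comb hs a t) \<in> B"
    using qh unfolding quot_basis_def by auto
  then have "(\<lambda>t. y t - lin_comb (z # hs) (\<lambda>i. if i = 0 then y x else a (i - 1)) t) \<in> B"
    by (simp add: lin_comb_Cons algebra_simps)
  then show "\<exists>a. (\<lambda>t. y t - lin_comb (z # hs) a t) \<in> B" by blast
next
  fix a i assume a: "lin_comb (z # hs) a \<in> B" and i: "i < length (z # hs)"
  have lx: "lin_comb hs a' x = 0" for a'
    using qh unfolding quot_basis_def lin_comb_def by (auto intro!: sum.neutral dest!: nth_mem)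
  have a0: "a 0 = 0"
    using B0 a lx z(2) by (auto simp: lin_comb_Cons)
  then have "lin_comb hs (\<lambda>i. a (Suc i)) \<in> B" using a by (simp add: lin_comb_Cons)
  then have "\<forall>i<length hs. a (Suc i) = 0" using qh unfolding quot_basis_def by blast
  then show "a i = 0" using a0 i by (cases i) auto
qed

lemma quot_basis_exists:
  assumes "finite F" "lin_subspace Z" "lin_subspace B" "B \<subseteq> Z"
    and "\<forall>z\<in>Z. \<forall>t. t \<notin> F \<longrightarrow> z t = 0"
  shows "\<exists>hs. quot_basis Z B hs"
  using assms
proof (induction F arbitrary: Z B rule: finite_induct)
  case empty
  then have "Z \<subseteq> {\<lambda>_. 0}" by auto
  then have "quot_basis Z B []"
    using empty lin_subspace_zero[of B] unfolding quot_basis_def lin_comb_def by auto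
  then show ?case by blast
next
  case (insert x F Z B)
  define Z' where "Z' = {z \<in> Z. z x = 0}"
  define B' where "B' = {b \<in> B. b x = 0}"
  have "lin_subspace Z'" "lin_subspace B'"
    using insert.prems(1,2) unfolding Z'_def B'_def lin_subspace_def by auto
  moreover have "B' \<subseteq> Z'" "\<forall>z\<in>Z'. \<forall>t. t \<notin> F \<longrightarrow> z t = 0"
    using insert.prems(3,4) unfolding Z'_def B'_def by auto
  ultimately obtain hs where qh: "quot_basis Z' B' hs"
    using insert.IH by blast
  consider (pivot_in_B) b where "b \<in> B" "b x \<noteq> 0"
    | (pivot_in_Z) z where "\<forall>b\<in>B. b x = 0" "z \<in> Z" "z x \<noteq> 0"
    | (no_pivot) "\<forall>z\<in>Z. z x = 0"
    by metis
  then show ?case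
  proof cases
    case pivot_in_B
    have "(\<lambda>t. 1 / b x * b t) \<in> B"
      using lin_subspace_scale[OF insert.prems(2) pivot_in_B(1)] .
    then have "quot_basis Z B hs"
      using quot_basis_pivot_in_sub[OF insert.prems(1-3) _ _ qh[unfolded Z'_def B'_def]] pivot_in_B(2)
      by simp
    then show ?thesis by blast
  next
    case pivot_in_Z
    have "(\<lambda>t. 1 / z x * z t) \<in> Z"
      using lin_subspace_scale[OF insert.prems(1) pivot_in_Z(2)] .
    moreover have "B' = B" using pivot_in_Z(1) unfolding B'_def by auto
    ultimately have "quot_basis Z B ((\<lambda>t. 1 / z x * z t) # hs)"
      using quot_basis_pivot[OF insert.prems(1) _ _ pivot_in_Z(1)] qh pivot_in_Z(3)
      unfolding Z'_def by simp
    then show ?thesis by blast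
  next
    case no_pivot
    then have "Z' = Z" "B' = B" using insert.prems(3) unfolding Z'_def B'_def by auto
    then show ?thesis using qh by blast
  qed
qed

section \<open>Permutations of lists\<close>

lemma permute_list_by_eq_permute_list: "permute_list_by p s = permute_list p s"
  unfolding permute_list_by_def permute_list_def ..

lemma permute_list_inv_left:
  "p permutes {..<length s} \<Longrightarrow> permute_list (inv p) (permute_list p s) = s"
  using permute_list_compose[OF permutes_inv, of p s p] permutes_inv_o(1)[of p] by simp

lemma permute_list_inv_right:
  "p permutes {..<length s} \<Longrightarrow> permute_list p (permute_list (inv p) s) = s"
  using permute_list_compose[of p s "inv p"] permutes_inv_o(2)[of p] by simp

lemma permute_list_inj:
  assumes "p permutes {..<n}" "length s = n" "length s' = n" "permute_list p s = permute_list p s'"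
  shows "s = s'"
  using permute_list_inv_left[of p s] permute_list_inv_left[of p s'] assms by metis

lemma permutes_eq_if_permute_list_eq:
  assumes "distinct u" "p permutes {..<length u}" "p' permutes {..<length u}"
    "permute_list p u = permute_list p' u"
  shows "p = p'"
proof
  fix i show "p i = p' i"
  proof (cases "i < length u")
    case True
    then have "u ! p i = u ! p' i"
      using arg_cong[OF assms(4), of "\<lambda>l. l ! i"] permute_list_nth[OF assms(2)] permute_list_nth[OF assms(3)]
      by simp
    moreover have "p i < length u" "p' i < length u"
      using permutes_in_image[OF assms(2)] permutes_in_image[OF assms(3)] True by auto
    ultimately show ?thesis using assms(1) nth_eq_iff_index_eq by blast
  next
    case False
    then show ?thesis using assms(2,3) by (simp add: permutes_not_in)
  qed
qed

lemma permute_list_transpose_eq: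
  assumes "a < length xs" "b < length xs" "xs ! a = xs ! b"
  shows "permute_list (Transposition.transpose a b) xs = xs"
proof (rule nth_equalityI)
  fix i assume "i < length (permute_list (Transposition.transpose a b) xs)"
  then show "permute_list (Transposition.transpose a b) xs ! i = xs ! i"
    using assms unfolding permute_list_def by (auto simp: Transposition.transpose_def)
qed simp

lemma permute_list_transpose_0_1: "permute_list (Transposition.transpose 0 1) (x # y # t) = y # x # t"
proof (rule nth_equalityI)
  fix i assume "i < length (permute_list (Transposition.transpose 0 1) (x # y # t))"
  then show "permute_list (Transposition.transpose 0 1) (x # y # t) ! i = (y # x # t) ! i"
    unfolding permute_list_def
    by (cases i; cases "i - 1") (auto simp: Transposition.transpose_def simp del: upt_Suc)
qed simp

definition cons_perm :: "(nat \<Rightarrow> nat) \<Rightarrow> nat \<Rightarrow> nat" where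
  "cons_perm p j = (if j = 0 then 0 else Suc (p (j - 1)))"

lemma cons_perm_eq_map_permutation:
  assumes "p permutes {..<n}"
  shows "cons_perm p = map_permutation {..<n} Suc p"
proof
  fix j
  show "cons_perm p j = map_permutation {..<n} Suc p j"
  proof (cases "j \<in> Suc ` {..<n}")
    case True
    then obtain k where k: "k < n" "j = Suc k" by auto
    then have "inv_into {..<n} Suc j = k" by (simp add: inv_into_f_eq)
    then show ?thesis using k unfolding map_permutation_def restrict_id_def cons_perm_def by simp
  next
    case False
    then have "j = 0 \<or> j > n" by (cases j) auto
    then show ?thesis using False assms unfolding map_permutation_def restrict_id_def cons_perm_def
      by (auto simp: permutes_not_in)
  qed
qed

lemma cons_perm_permutes:
  assumes "p permutes {..<n}"
  shows "cons_perm p permutes {..<Suc n}"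
proof -
  have "bij_betw Suc {..<n} {1..<Suc n}"
    by (simp add: lessThan_atLeast0)
  then have "map_permutation {..<n} Suc p permutes {1..<Suc n}"
    using map_permutation_permutes assms by blast
  then show ?thesis
    using cons_perm_eq_map_permutation[OF assms] by (auto intro: permutes_subset)
qed

lemma sign_cons_perm: "p permutes {..<n} \<Longrightarrow> sign (cons_perm p) = sign p"
  using sign_map_permutation[of Suc "{..<n}" p] cons_perm_eq_map_permutation by simp

lemma permute_list_cons_perm:
  assumes "p permutes {..<length u}"
  shows "permute_list (cons_perm p) (x # u) = x # permute_list p u"
proof (rule nth_equalityI)
  fix i assume "i < length (permute_list (cons_perm p) (x # u))"
  then show "permute_list (cons_perm p) (x # u) ! i = (x # permute_list p u) ! i"
    using permute_list_nth[OF assms] unfolding permute_list_def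
    by (cases i) (simp_all add: cons_perm_def del: upt_Suc)
qed simp

text \<open>The cycle moving position \<open>i\<close> of a list to the front, as a product of \<open>i\<close>
  transpositions.\<close>

primrec to_front :: "nat \<Rightarrow> nat \<Rightarrow> nat" where
  "to_front 0 = id"
| "to_front (Suc i) = to_front i \<circ> Transposition.transpose 0 (Suc i)"

lemma to_front_permutes: "i < n \<Longrightarrow> to_front i permutes {..<n}"
proof (induction i)
  case 0
  show ?case unfolding to_front.simps by (rule permutes_id)
next
  case (Suc i)
  then show ?case
    unfolding to_front.simps by (intro permutes_compose permutes_swap_id) auto
qed

lemma sign_to_front: "sign (to_front i) = (-1) ^ i"
proof (induction i)
  case 0
  then show ?case by simp
next
  case (Suc i)
  have "permutation (to_front i)"
    using to_front_permutes[of i "Suc i"] permutes_imp_permutation by blast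
  then have "sign (to_front (Suc i)) = sign (to_front i) * sign (Transposition.transpose (0::nat) (Suc i))"
    unfolding to_front.simps by (rule sign_compose[OF _ permutation_swap_id])
  then show ?case
    using Suc.IH by (simp add: sign_swap_id del: to_front.simps)
qed

lemma to_front_apply: "to_front i j = (if j = 0 then i else if j \<le> i then j - 1 else j)"
  by (induction i arbitrary: j) (auto simp: Transposition.transpose_def)

lemma distinct_del_nth: "distinct s \<Longrightarrow> distinct (del_nth i s)"
  unfolding del_nth_def by (simp add: set_take_disj_set_drop_if_distinct)

lemma permute_list_to_front:
  assumes "i < length s"
  shows "permute_list (to_front i) s = s ! i # del_nth i s"
proof (rule nth_equalityI)
  show "length (permute_list (to_front i) s) = length (s ! i # del_nth i s)"
    using assms by (simp add: del_nth_def)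
next
  fix k assume "k < length (permute_list (to_front i) s)"
  then have k: "k < length s" by simp
  have "permute_list (to_front i) s ! k = s ! to_front i k"
    unfolding permute_list_def using k by simp
  also have "\<dots> = (s ! i # del_nth i s) ! k"
    using assms k by (cases k) (auto simp: to_front_apply del_nth_def nth_append min_def)
  finally show "permute_list (to_front i) s ! k = (s ! i # del_nth i s) ! k" .
qed

lemma sum_eq_0_if_sign_reversing_involution:
  fixes c :: "'b \<Rightarrow> 'c::linordered_ab_group_add"
  assumes "\<And>s. s \<in> A \<Longrightarrow> \<iota> s \<in> A" "\<And>s. s \<in> A \<Longrightarrow> \<iota> (\<iota> s) = s"
    and "\<And>s. s \<in> A \<Longrightarrow> c (\<iota> s) = - c s"
  shows "(\<Sum>s\<in>A. c s) = 0"
proof -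
  have "bij_betw \<iota> A A"
    by (rule bij_betw_byWitness[where f'=\<iota>]) (use assms in auto)
  then have "(\<Sum>s\<in>A. c s) = (\<Sum>s\<in>A. c (\<iota> s))"
    using sum.reindex_bij_betw[of \<iota> A A c] by simp
  also have "\<dots> = - (\<Sum>s\<in>A. c s)"
    using assms(3) by (simp add: sum_negf)
  finally show ?thesis by simp
qed

section \<open>Oriented chains and the boundary\<close>

lemma gen_permute_list:
  assumes "distinct u" "r permutes {..<length u}"
  shows "gen u (permute_list r u) = of_int (sign r)"
proof -
  have "(SOME p. p permutes {..<length u} \<and> permute_list r u = permute_list_by p u) = r"
  proof (rule some_equality)
    show "r permutes {..<length u} \<and> permute_list r u = permute_list_by r u"
      using assms(2) by (simp add: permute_list_by_eq_permute_list)
  next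
    fix p assume "p permutes {..<length u} \<and> permute_list r u = permute_list_by p u"
    then show "p = r"
      using permutes_eq_if_permute_list_eq[OF assms(1) _ assms(2)]
      by (simp add: permute_list_by_eq_permute_list)
  qed
  then show ?thesis
    using assms(2) unfolding gen_def by (auto simp: permute_list_by_eq_permute_list)
qed

lemma gen_eq_0:
  "\<not> (\<exists>p. p permutes {..<length u} \<and> t = permute_list p u) \<Longrightarrow> gen u t = 0"
  unfolding gen_def by (simp add: permute_list_by_eq_permute_list)

lemma set_eq_if_gen_nonzero:
  assumes "gen u t \<noteq> 0"
  shows "set t = set u"
proof -
  obtain p where "p permutes {..<length u}" "t = permute_list p u"
    using gen_eq_0[of u t] assms by blast
  then show ?thesis by simp
qed

lemma gen_self: "distinct u \<Longrightarrow> gen u u = 1"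
  using gen_permute_list[of u id] by simp

lemma gen_eq_sum:
  assumes "distinct u"
  shows "gen u t =
    (\<Sum>p | p permutes {..<length u}. if t = permute_list p u then of_int (sign p) else 0)"
proof (cases "\<exists>p. p permutes {..<length u} \<and> t = permute_list p u")
  case True
  then obtain r where r: "r permutes {..<length u}" "t = permute_list r u" by blast
  have "(\<Sum>p | p permutes {..<length u}. if t = permute_list p u then of_int (sign p) else 0) =
      (\<Sum>p | p permutes {..<length u}. if p = r then of_int (sign p) else (0::rat))"
    using permutes_eq_if_permute_list_eq[OF assms] r by (intro sum.cong) auto
  also have "\<dots> = of_int (sign r)" using r by (simp add: finite_permutations)
  finally show ?thesis using gen_permute_list[OF assms r(1)] r(2) by simp
next
  case False
  then show ?thesis by (simp add: gen_eq_0 sum.neutral)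
qed

lemma gen_eq_0_if_not_distinct: "distinct u \<Longrightarrow> \<not> distinct t \<Longrightarrow> gen u t = 0"
  by (rule gen_eq_0) auto

lemma lin_map_bdry: "lin_map (bdry X adj q)"
  unfolding lin_map_def bdry_def
  by (auto simp: fun_eq_iff sum.distrib sum_distrib_left add_divide_distrib distrib_right mult.assoc)

lemma lin_map_chain_map: "lin_map (chain_map X adj f q)"
  unfolding lin_map_def chain_map_def
  by (auto simp: fun_eq_iff sum.distrib sum_distrib_left add_divide_distrib distrib_right mult.assoc)

lemma lin_subspace_chains: "lin_subspace (chains X adj q)"
  unfolding lin_subspace_def chains_def by (auto simp: algebra_simps)

lemma osimplex_length: "osimplex X adj q s \<Longrightarrow> length s = Suc q"
  and osimplex_distinct: "osimplex X adj q s \<Longrightarrow> distinct s"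
  unfolding osimplex_def by simp_all

lemma osimplex_Cons: "osimplex X adj (Suc r) (x # t) \<Longrightarrow> osimplex X adj r t"
  unfolding osimplex_def by auto

lemma osimplex_permute_list_iff:
  assumes "p permutes {..<length s}"
  shows "osimplex X adj q (permute_list p s) \<longleftrightarrow> osimplex X adj q s"
  using assms unfolding osimplex_def by simp

lemma chains_vanish: "c \<in> chains X adj q \<Longrightarrow> \<not> osimplex X adj q s \<Longrightarrow> c s = 0"
  unfolding chains_def by auto

lemma chain_permute_list:
  assumes c: "c \<in> chains X adj q" and p: "p permutes {..<length s}"
  shows "c (permute_list p s) = of_int (sign p) * c s"
proof (cases "osimplex X adj q s")
  case True
  then show ?thesis
    using c p osimplex_length[OF True] unfolding chains_def by (simp add: permute_list_by_eq_permute_list)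
next
  case False
  then show ?thesis using chains_vanish[OF c] osimplex_permute_list_iff[OF p] by simp
qed

lemma gen_permute_list_arg:
  assumes du: "distinct u" and pu: "p permutes {..<length u}" and lt: "length t = length u"
  shows "gen u (permute_list p t) = of_int (sign p) * gen u t"
proof (cases "\<exists>r. r permutes {..<length u} \<and> t = permute_list r u")
  case True
  then obtain r where r: "r permutes {..<length u}" "t = permute_list r u" by blast
  have "gen u (permute_list p t) = of_int (sign (r \<circ> p))"
    using gen_permute_list[OF du permutes_compose[OF pu r(1)]] permute_list_compose[OF pu, of r] r(2)
    by simp
  then show ?thesis
    using gen_permute_list[OF du r(1)] r(2)
      sign_compose[OF permutes_imp_permutation[OF _ r(1)] permutes_imp_permutation[OF _ pu]]
    by simp
next
  case False
  have "\<not> (\<exists>r. r permutes {..<length u} \<and> permute_list p t = permute_list r u)"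
  proof
    assume "\<exists>r. r permutes {..<length u} \<and> permute_list p t = permute_list r u"
    then obtain r where r: "r permutes {..<length u}" "permute_list p t = permute_list r u" by blast
    have ipu: "inv p permutes {..<length u}" using permutes_inv[OF pu] .
    have "t = permute_list (inv p) (permute_list p t)"
      using permute_list_inv_left[of p t] lt pu by simp
    also have "\<dots> = permute_list (r \<circ> inv p) u"
      using r(2) permute_list_compose[OF ipu, of r] by simp
    finally show False using False permutes_compose[OF ipu r(1)] by blast
  qed
  then show ?thesis using False by (simp add: gen_eq_0)
qed

lemma gen_in_chains:
  assumes u: "osimplex X adj q u"
  shows "gen u \<in> chains X adj q"
  unfolding chains_def
proof (intro CollectI conjI allI impI)
  fix t assume "\<not> osimplex X adj q t"
  then show "gen u t = 0"
    using gen_eq_0[of u t] osimplex_permute_list_iff[of _ u X adj q] u by blast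
next
  fix t p assume t: "osimplex X adj q t" and "p permutes {..<Suc q}"
  then show "gen u (permute_list_by p t) = of_int (sign p) * gen u t"
    using gen_permute_list_arg[OF osimplex_distinct[OF u]] osimplex_length[OF u] osimplex_length[OF t]
    by (simp add: permute_list_by_eq_permute_list)
qed

lemma chain_eq_gen:
  assumes c: "c \<in> chains X adj q" and v: "osimplex X adj q v" and t: "osimplex X adj q t"
    and st: "set v = set t"
  shows "c t = c v * gen v t"
proof -
  have "mset t = mset v"
    using t v st unfolding osimplex_def by (simp add: set_eq_iff_mset_eq_distinct)
  then obtain r where r: "r permutes {..<length v}" "permute_list r v = t"
    by (rule mset_eq_permutation)
  then show ?thesis
    using chain_permute_list[OF c r(1)] gen_permute_list[OF osimplex_distinct[OF v] r(1)] by simp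
qed

locale finite_image =
  fixes X :: "'a set" and adj :: "'a \<Rightarrow> 'a \<Rightarrow> bool"
  assumes finite_X: "finite X"
begin

abbreviation osimplices :: "nat \<Rightarrow> 'a list set" where
  "osimplices q \<equiv> {s. osimplex X adj q s}"

lemma finite_osimplices: "finite (osimplices q)"
proof (rule finite_subset)
  show "osimplices q \<subseteq> {xs. set xs \<subseteq> X \<and> length xs = Suc q}"
    unfolding osimplex_def by auto
qed (rule finite_lists_length_eq[OF finite_X])

lemma bij_betw_permute_list_osimplices:
  assumes "p permutes {..<Suc q}"
  shows "bij_betw (permute_list p) (osimplices q) (osimplices q)"
proof (rule bij_betw_byWitness[where f'="permute_list (inv p)"])
  show "\<forall>s\<in>osimplices q. permute_list (inv p) (permute_list p s) = s"
    using assms by (auto simp: permute_list_inv_left osimplex_def)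
  show "\<forall>s\<in>osimplices q. permute_list p (permute_list (inv p) s) = s"
    using assms by (auto simp: permute_list_inv_right osimplex_def)
  show "permute_list p ` osimplices q \<subseteq> osimplices q"
    using assms by (auto simp: osimplex_def)
  show "permute_list (inv p) ` osimplices q \<subseteq> osimplices q"
    using permutes_inv[OF assms] by (auto simp: osimplex_def)
qed

lemma sum_osimplices_permute_list:
  "p permutes {..<Suc q} \<Longrightarrow> (\<Sum>s\<in>osimplices q. F (permute_list p s)) = (\<Sum>s\<in>osimplices q. F s)"
  using sum.reindex_bij_betw[OF bij_betw_permute_list_osimplices] by blast

text \<open>The basic counting identity behind both the boundary and the chain map: for \<open>h\<close>
  compatible with reordering, expanding \<open>gen (h s) t\<close> as a sum over permutations and
  reindexing each summand by the lifted permutation \<open>P p\<close> produces \<open>m!\<close> equal terms.\<close>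

lemma sum_chain_gen_comp:
  fixes c :: "'a list \<Rightarrow> rat"
  assumes c: "c \<in> chains X adj q" and t: "distinct t"
    and len: "\<And>s. s \<in> osimplices q \<Longrightarrow> length (h s) = m"
    and P: "\<And>p. p permutes {..<m} \<Longrightarrow> P p permutes {..<Suc q} \<and> sign (P p) = sign p"
    and comm: "\<And>p s. p permutes {..<m} \<Longrightarrow> s \<in> osimplices q \<Longrightarrow>
      h (permute_list (P p) s) = permute_list p (h s)"
  shows "(\<Sum>s\<in>osimplices q. c s * (if distinct (h s) then gen (h s) t else 0)) =
    fact m * (\<Sum>s\<in>{s \<in> osimplices q. h s = t}. c s)"
proof -
  let ?Perm = "{p. p permutes {..<m}}"
  let ?F = "\<lambda>s. if h s = t then c s else 0"
  have expand: "(if distinct (h s) then gen (h s) t else 0) =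
      (\<Sum>p\<in>?Perm. if t = permute_list p (h s) then of_int (sign p) else 0)"
    if s: "s \<in> osimplices q" for s
  proof (cases "distinct (h s)")
    case True
    then show ?thesis using gen_eq_sum[OF True, of t] len[OF s] by simp
  next
    case False
    have "(\<Sum>p\<in>?Perm. if t = permute_list p (h s) then of_int (sign p) else 0) = 0"
      using False t len[OF s] by (intro sum.neutral) auto
    then show ?thesis using False by simp
  qed
  have reindex: "(\<Sum>s\<in>osimplices q. c s * (if t = permute_list p (h s) then of_int (sign p) else 0)) =
      (\<Sum>s\<in>osimplices q. ?F s)" if p: "p \<in> ?Perm" for p
  proof -
    have "c s * (if t = permute_list p (h s) then of_int (sign p) else 0) = ?F (permute_list (P p) s)"
      if s: "s \<in> osimplices q" for s
    proof -
      have "P p permutes {..<length s}" using P p osimplex_length[of X adj q s] s by auto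
      then have "c (permute_list (P p) s) = of_int (sign p) * c s"
        using chain_permute_list[OF c] P p by simp
      then show ?thesis using comm p s sign_idempotent[of p]
        by (auto simp flip: of_int_mult)
    qed
    then show ?thesis
      using sum_osimplices_permute_list[of "P p" q ?F] P p by simp
  qed
  have "(\<Sum>s\<in>osimplices q. c s * (if distinct (h s) then gen (h s) t else 0)) =
      (\<Sum>p\<in>?Perm. \<Sum>s\<in>osimplices q. c s * (if t = permute_list p (h s) then of_int (sign p) else 0))"
    by (simp add: expand sum_distrib_left sum.swap[of _ ?Perm])
  also have "\<dots> = (\<Sum>p\<in>?Perm. \<Sum>s\<in>osimplices q. ?F s)"
    using reindex by simp
  also have "\<dots> = fact m * (\<Sum>s\<in>osimplices q. ?F s)"
    using card_permutations[of "{..<m}" m] by simp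
  also have "\<dots> = fact m * (\<Sum>s\<in>{s \<in> osimplices q. h s = t}. c s)"
    by (simp only: sum.inter_filter[OF finite_osimplices])
  finally show ?thesis .
qed

lemma sum_osimplices_tl:
  assumes c: "c \<in> chains X adj (Suc r)"
  shows "(\<Sum>s\<in>{s \<in> osimplices (Suc r). tl s = t}. c s) = (\<Sum>x\<in>X. c (x # t))"
proof -
  have "{s \<in> osimplices (Suc r). tl s = t} = (\<lambda>x. x # t) ` {x \<in> X. osimplex X adj (Suc r) (x # t)}"
  proof (intro equalityI subsetI)
    fix s assume s: "s \<in> {s \<in> osimplices (Suc r). tl s = t}"
    then obtain x where "s = x # t" "x \<in> X"
      unfolding osimplex_def by (cases s) auto
    then show "s \<in> (\<lambda>x. x # t) ` {x \<in> X. osimplex X adj (Suc r) (x # t)}" using s by auto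
  qed auto
  then have "(\<Sum>s\<in>{s \<in> osimplices (Suc r). tl s = t}. c s) =
      (\<Sum>x\<in>{x \<in> X. osimplex X adj (Suc r) (x # t)}. c (x # t))"
    by (simp add: sum.reindex inj_on_def)
  also have "\<dots> = (\<Sum>x\<in>X. c (x # t))"
    using finite_X chains_vanish[OF c] by (intro sum.mono_neutral_left) auto
  finally show ?thesis .
qed

lemma sum_face_eq_sum_tl:
  assumes c: "c \<in> chains X adj (Suc r)" and i: "i < Suc (Suc r)"
  shows "(\<Sum>s\<in>osimplices (Suc r). c s * ((-1) ^ i * gen (del_nth i s) t)) =
    (\<Sum>s\<in>osimplices (Suc r). c s * gen (tl s) t)"
proof -
  let ?G = "\<lambda>s. c s * gen (tl s) t"
  have "c s * ((-1) ^ i * gen (del_nth i s) t) = ?G (permute_list (to_front i) s)"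
    if s: "s \<in> osimplices (Suc r)" for s
  proof -
    have l: "length s = Suc (Suc r)" using osimplex_length s by blast
    have "c (permute_list (to_front i) s) = (-1) ^ i * c s"
      using chain_permute_list[OF c] to_front_permutes[of i] i l sign_to_front by simp
    moreover have "tl (permute_list (to_front i) s) = del_nth i s"
      using permute_list_to_front[of i s] i l by simp
    ultimately show ?thesis by simp
  qed
  then show ?thesis
    using sum_osimplices_permute_list[OF to_front_permutes[OF i], of ?G] by simp
qed

lemma sum_chain_gen_tl:
  assumes c: "c \<in> chains X adj (Suc r)" and t: "distinct t"
  shows "(\<Sum>s\<in>osimplices (Suc r). c s * gen (tl s) t) = fact (Suc r) * (\<Sum>x\<in>X. c (x # t))"
proof -
  have tl_perm: "tl (permute_list (cons_perm p) s) = permute_list p (tl s)"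
    if "p permutes {..<Suc r}" "s \<in> osimplices (Suc r)" for p s
    using that osimplex_length[of X adj "Suc r" s] permute_list_cons_perm[of p "tl s" "hd s"]
    by (cases s) auto
  have "(\<Sum>s\<in>osimplices (Suc r). c s * (if distinct (tl s) then gen (tl s) t else 0)) =
      fact (Suc r) * (\<Sum>s\<in>{s \<in> osimplices (Suc r). tl s = t}. c s)"
    by (rule sum_chain_gen_comp[OF c t, of tl "Suc r" cons_perm])
      (use osimplex_length[of X adj "Suc r"] tl_perm cons_perm_permutes sign_cons_perm in auto)
  moreover have "(\<Sum>s\<in>osimplices (Suc r). c s * (if distinct (tl s) then gen (tl s) t else 0)) =
      (\<Sum>s\<in>osimplices (Suc r). c s * gen (tl s) t)"
    using osimplex_distinct[of X adj "Suc r"] distinct_tl by (intro sum.cong) auto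
  ultimately show ?thesis
    using sum_osimplices_tl[OF c] by simp
qed

lemma bdry_eq_sum_cons:
  assumes c: "c \<in> chains X adj (Suc r)"
  shows "bdry X adj (Suc r) c t = (\<Sum>x\<in>X. c (x # t))"
proof (cases "distinct t")
  case True
  define n where "n = Suc (Suc r)"
  have swap: "(\<Sum>s\<in>S. c s / F * (\<Sum>i<n. g i s)) = 1 / F * (\<Sum>i<n. \<Sum>s\<in>S. c s * g i s)"
    for S and F :: rat and g :: "nat \<Rightarrow> 'a list \<Rightarrow> rat"
    by (simp add: sum_distrib_left sum.swap[of _ "{..<n}"] mult_ac)
  have "bdry X adj (Suc r) c t =
      1 / of_nat (fact n) * (\<Sum>i<n. \<Sum>s\<in>osimplices (Suc r). c s * ((-1) ^ i * gen (del_nth i s) t))"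
    unfolding bdry_def n_def[symmetric] by (rule swap)
  also have "\<dots> = 1 / of_nat (fact n) * (\<Sum>i<n. \<Sum>s\<in>osimplices (Suc r). c s * gen (tl s) t)"
    using sum_face_eq_sum_tl[OF c] by (simp add: n_def)
  also have "\<dots> = 1 / fact n * (of_nat n * (fact (Suc r) * (\<Sum>x\<in>X. c (x # t))))"
    using sum_chain_gen_tl[OF c True] by simp
  also have "\<dots> = (\<Sum>x\<in>X. c (x # t))"
    unfolding n_def fact_Suc[of "Suc r"] by simp
  finally show ?thesis .
next
  case False
  have "gen (del_nth i s) t = 0" if "s \<in> osimplices (Suc r)" for s i
    using False distinct_del_nth[OF osimplex_distinct[OF that[simplified]]]
    by (intro gen_eq_0_if_not_distinct)
  moreover have "c (x # t) = 0" for x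
    using False chains_vanish[OF c] osimplex_distinct by fastforce
  ultimately show ?thesis
    unfolding bdry_def by simp
qed

lemma bdry_in_chains:
  assumes c: "c \<in> chains X adj (Suc r)"
  shows "bdry X adj (Suc r) c \<in> chains X adj r"
  unfolding chains_def
proof (intro CollectI conjI allI impI)
  fix t assume "\<not> osimplex X adj r t"
  then have "c (x # t) = 0" for x
    using chains_vanish[OF c] osimplex_Cons[of X adj r _ t] by blast
  then show "bdry X adj (Suc r) c t = 0" using bdry_eq_sum_cons[OF c] by simp
next
  fix t p assume t: "osimplex X adj r t" and p: "p permutes {..<Suc r}"
  have pt: "p permutes {..<length t}" using p osimplex_length[OF t] by simp
  have "c (x # permute_list p t) = of_int (sign p) * c (x # t)" for x
    using chain_permute_list[OF c, of "cons_perm p" "x # t"] cons_perm_permutes[OF pt]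
      permute_list_cons_perm[OF pt] sign_cons_perm[OF pt] by simp
  then show "bdry X adj (Suc r) c (permute_list_by p t) = of_int (sign p) * bdry X adj (Suc r) c t"
    unfolding permute_list_by_eq_permute_list bdry_eq_sum_cons[OF c] by (simp add: sum_distrib_left)
qed

lemma bdry_bdry:
  assumes c: "c \<in> chains X adj (Suc (Suc r))"
  shows "bdry X adj (Suc r) (bdry X adj (Suc (Suc r)) c) = (\<lambda>_. 0)"
proof
  fix t
  have swap: "c (x # y # t) = - c (y # x # t)" for x y
  proof (cases "length t = Suc r")
    case True
    have "Transposition.transpose 0 1 permutes {..<length (x # y # t)}"
      by (intro permutes_swap_id) auto
    from chain_permute_list[OF c this] have "c (y # x # t) = - c (x # y # t)"
      unfolding permute_list_transpose_0_1 by (simp add: sign_swap_id)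
    then show ?thesis by simp
  next
    case False
    then show ?thesis using chains_vanish[OF c] unfolding osimplex_def by auto
  qed
  have "(\<Sum>y\<in>X. \<Sum>x\<in>X. c (x # y # t)) = (\<Sum>y\<in>X. \<Sum>x\<in>X. - c (y # x # t))"
    by (intro sum.cong refl) (rule swap)
  also have "\<dots> = - (\<Sum>x\<in>X. \<Sum>y\<in>X. c (x # y # t))"
    by (simp add: sum_negf)
  finally have "(\<Sum>y\<in>X. \<Sum>x\<in>X. c (x # y # t)) = 0"
    using sum.swap[of "\<lambda>y x. c (x # y # t)" X X] by simp
  then show "bdry X adj (Suc r) (bdry X adj (Suc (Suc r)) c) t = 0"
    unfolding bdry_eq_sum_cons[OF bdry_in_chains[OF c]] bdry_eq_sum_cons[OF c] by simp
qed

lemma cycles_subset_chains: "cycles X adj q \<subseteq> chains X adj q"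
  unfolding cycles_def by auto

lemma lin_subspace_cycles: "lin_subspace (cycles X adj q)"
  using lin_subspace_chains[of X adj q] lin_map_bdry[of X adj q] lin_map_zero[OF lin_map_bdry]
  unfolding lin_subspace_def cycles_def lin_map_def by (auto simp: fun_eq_iff)

lemma lin_subspace_boundaries: "lin_subspace (boundaries X adj q)"
  unfolding boundaries_def by (rule lin_subspace_image[OF lin_subspace_chains lin_map_bdry])

lemma boundaries_subset_cycles: "boundaries X adj q \<subseteq> cycles X adj q"
  unfolding boundaries_def cycles_def
  using bdry_in_chains bdry_bdry by (cases q) auto

lemma zero_in_boundaries: "{\<lambda>_. 0} \<subseteq> boundaries X adj q"
  using lin_subspace_zero[OF lin_subspace_boundaries] by simp

lemma quot_basis_exists_chains:
  assumes "lin_subspace Z" "lin_subspace B" "B \<subseteq> Z" "Z \<subseteq> chains X adj q"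
  shows "\<exists>hs. quot_basis Z B hs"
  using quot_basis_exists[OF finite_osimplices assms(1-3)] assms(4) chains_vanish by blast

lemma boundaries_top:
  assumes "card X = Suc m"
  shows "boundaries X adj m = {\<lambda>_. 0}"
proof -
  have "\<not> osimplex X adj (Suc m) s" for s
  proof
    assume s: "osimplex X adj (Suc m) s"
    then have "card (set s) = Suc (Suc m)" unfolding osimplex_def by (simp add: distinct_card)
    moreover have "card (set s) \<le> card X" using s finite_X unfolding osimplex_def by (simp add: card_mono)
    ultimately show False using assms by simp
  qed
  then have "chains X adj (Suc m) = {\<lambda>_. 0}"
    using chains_vanish lin_subspace_zero[OF lin_subspace_chains] by fastforce
  then show ?thesis
    unfolding boundaries_def using lin_map_zero[OF lin_map_bdry] by simp
qed

definition simplex_reps :: "nat \<Rightarrow> 'a list list \<Rightarrow> bool" where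
  "simplex_reps q vs \<longleftrightarrow> (\<forall>v\<in>set vs. osimplex X adj q v) \<and> distinct (map set vs) \<and>
     (\<forall>s. osimplex X adj q s \<longrightarrow> (\<exists>v\<in>set vs. set v = set s))"

lemma simplex_reps_exist: "\<exists>vs. simplex_reps q vs"
proof -
  define rep where "rep \<sigma> = (SOME s. osimplex X adj q s \<and> set s = \<sigma>)" for \<sigma>
  have rep: "osimplex X adj q (rep \<sigma>) \<and> set (rep \<sigma>) = \<sigma>" if "\<sigma> \<in> set ` osimplices q" for \<sigma>
  proof -
    from that obtain s where "osimplex X adj q s \<and> set s = \<sigma>" by blast
    then show ?thesis unfolding rep_def by (rule someI)
  qed
  have "finite (set ` osimplices q)" using finite_osimplices by simp
  then obtain sl where sl: "set sl = set ` osimplices q" "distinct sl"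
    using finite_distinct_list by metis
  then have rep_sl: "osimplex X adj q (rep \<sigma>)" "set (rep \<sigma>) = \<sigma>" if "\<sigma> \<in> set sl" for \<sigma>
    using rep that by auto
  have "map set (map rep sl) = sl"
    unfolding map_map by (rule map_idI) (simp add: rep_sl(2))
  moreover have "\<exists>v\<in>set (map rep sl). set v = set s" if "osimplex X adj q s" for s
  proof -
    have "set s \<in> set sl" using that sl(1) by blast
    then show ?thesis using rep_sl(2) by (intro bexI[of _ "rep (set s)"]) auto
  qed
  ultimately have "simplex_reps q (map rep sl)"
    unfolding simplex_reps_def using rep_sl(1) sl(2) by auto
  then show ?thesis by blast
qed

lemma lin_comb_gen_reps:
  assumes vs: "simplex_reps q vs" and t: "osimplex X adj q t"
    and i: "i < length vs" "set (vs ! i) = set t"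
  shows "lin_comb (map gen vs) a t = a i * gen (vs ! i) t"
proof -
  have "gen (vs ! j) t = 0" if "j < length vs" "j \<noteq> i" for j
  proof (rule ccontr)
    assume "gen (vs ! j) t \<noteq> 0"
    then have "set (vs ! j) = set (vs ! i)" using set_eq_if_gen_nonzero i(2) by metis
    then show False
      using vs that i(1) unfolding simplex_reps_def by (simp add: distinct_conv_nth)
  qed
  then have "lin_comb (map gen vs) a t = (\<Sum>j<length vs. if j = i then a i * gen (vs ! i) t else 0)"
    unfolding lin_comb_def by (intro sum.cong) auto
  then show ?thesis using i(1) by simp
qed

lemma simplex_reps_osimplex: "simplex_reps q vs \<Longrightarrow> i < length vs \<Longrightarrow> osimplex X adj q (vs ! i)"
  unfolding simplex_reps_def by auto

lemma lin_comb_gen_reps_chain: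
  assumes vs: "simplex_reps q vs" and c: "c \<in> chains X adj q"
  shows "lin_comb (map gen vs) (\<lambda>i. c (vs ! i)) t = c t"
proof (cases "osimplex X adj q t")
  case True
  then obtain v where "v \<in> set vs" "set v = set t"
    using vs unfolding simplex_reps_def by blast
  then obtain i where "i < length vs" "set (vs ! i) = set t"
    by (auto simp: in_set_conv_nth)
  then show ?thesis
    using lin_comb_gen_reps[OF vs True] chain_eq_gen[OF c simplex_reps_osimplex[OF vs] True] by simp
next
  case False
  then show ?thesis
    unfolding lin_comb_def
    using chains_vanish[OF c] chains_vanish[OF gen_in_chains[OF simplex_reps_osimplex[OF vs]]]
    by simp
qed

lemma quot_basis_gen_reps:
  assumes vs: "simplex_reps q vs"
  shows "quot_basis (chains X adj q) {\<lambda>_. 0} (map gen vs)"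
    and "\<And>c i. c \<in> chains X adj q \<Longrightarrow> i < length vs \<Longrightarrow>
      quot_coords {\<lambda>_. 0} (map gen vs) c i = c (vs ! i)"
proof -
  note osv = simplex_reps_osimplex[OF vs]
  note expand = lin_comb_gen_reps_chain[OF vs]
  then have span: "(\<lambda>t. c t - lin_comb (map gen vs) (\<lambda>i. c (vs ! i)) t) \<in> {\<lambda>_. 0}"
    if "c \<in> chains X adj q" for c
    using that by simp
  show qb: "quot_basis (chains X adj q) {\<lambda>_. 0} (map gen vs)"
    unfolding quot_basis_def
  proof (intro conjI ballI allI impI)
    show "set (map gen vs) \<subseteq> chains X adj q"
      using vs gen_in_chains[of X adj q] unfolding simplex_reps_def by auto
  next
    fix c assume "c \<in> chains X adj q"
    then show "\<exists>a. (\<lambda>t. c t - lin_comb (map gen vs) a t) \<in> {\<lambda>_. 0}"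
      using span by blast
  next
    fix a i assume a: "lin_comb (map gen vs) a \<in> {\<lambda>_. 0}" and "i < length (map gen vs)"
    then have i: "i < length vs" by simp
    have "lin_comb (map gen vs) a (vs ! i) = a i * gen (vs ! i) (vs ! i)"
      by (rule lin_comb_gen_reps[OF vs osv[OF i] i refl])
    moreover have "gen (vs ! i) (vs ! i) = 1"
      using gen_self osimplex_distinct[OF osv[OF i]] by blast
    ultimately show "a i = 0" using a by simp
  qed
  show "quot_coords {\<lambda>_. 0} (map gen vs) c i = c (vs ! i)"
    if "c \<in> chains X adj q" "i < length vs" for c i
    using quot_coords_eqI[OF qb lin_subspace_singleton_zero span[OF that(1)]] that(2) by simp
qed

lemma quot_trace_chains_eq_sum_reps:
  assumes vs: "simplex_reps q vs" and g: "lin_map g" "g ` chains X adj q \<subseteq> chains X adj q"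
  shows "quot_trace (chains X adj q) {\<lambda>_. 0} g = (\<Sum>i<length vs. g (gen (vs ! i)) (vs ! i))"
proof -
  have "g (gen (vs ! i)) \<in> chains X adj q" if "i < length vs" for i
    using vs g(2) gen_in_chains[of X adj q] that unfolding simplex_reps_def by auto
  then show ?thesis
    using quot_trace_eq_trace_wrt[OF quot_basis_gen_reps(1)[OF vs] lin_subspace_singleton_zero g]
      lin_map_zero[OF g(1)] quot_basis_gen_reps(2)[OF vs]
    unfolding trace_wrt_def by simp
qed

end

section \<open>Chain maps and the Hopf trace formula\<close>

locale finite_self_map = finite_image +
  fixes f :: "'a \<Rightarrow> 'a"
  assumes cont: "dcontinuous X adj f"
begin

lemma osimplex_map:
  assumes s: "osimplex X adj q s" and d: "distinct (map f s)"
  shows "osimplex X adj q (map f s)"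
  unfolding osimplex_def
proof (intro conjI ballI impI)
  show "length (map f s) = Suc q" "distinct (map f s)" "set (map f s) \<subseteq> X"
    using s d cont unfolding osimplex_def dcontinuous_def by (auto simp: image_subset_iff)
next
  fix x y assume "x \<in> set (map f s)" "y \<in> set (map f s)" "x \<noteq> y"
  then obtain a b where "a \<in> set s" "b \<in> set s" "x = f a" "y = f b" "a \<noteq> b" by auto
  then show "adj x y"
    using s cont \<open>x \<noteq> y\<close> unfolding osimplex_def dcontinuous_def by blast
qed

lemma chain_map_eq_sum:
  assumes c: "c \<in> chains X adj q"
  shows "chain_map X adj f q c t =
    (if distinct t then (\<Sum>s\<in>{s \<in> osimplices q. map f s = t}. c s) else 0)"
proof (cases "distinct t")
  case True
  have "(\<Sum>s\<in>osimplices q. c s * (if distinct (map f s) then gen (map f s) t else 0)) =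
      fact (Suc q) * (\<Sum>s\<in>{s \<in> osimplices q. map f s = t}. c s)"
    by (rule sum_chain_gen_comp[OF c True, of "map f" "Suc q" "\<lambda>p. p"])
      (use osimplex_length[of X adj q] in \<open>auto simp: permute_list_map\<close>)
  moreover have "chain_map X adj f q c t =
      (\<Sum>s\<in>osimplices q. c s * (if distinct (map f s) then gen (map f s) t else 0)) / fact (Suc q)"
    unfolding chain_map_def sum_divide_distrib by (intro sum.cong) (auto simp del: fact_Suc)
  ultimately show ?thesis
    using True by (simp del: fact_Suc)
next
  case False
  then show ?thesis
    unfolding chain_map_def by (auto intro!: sum.neutral simp: gen_eq_0_if_not_distinct)
qed

lemma chain_map_in_chains:
  assumes c: "c \<in> chains X adj q"
  shows "chain_map X adj f q c \<in> chains X adj q"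
  unfolding chains_def
proof (intro CollectI conjI allI impI)
  fix t assume nt: "\<not> osimplex X adj q t"
  show "chain_map X adj f q c t = 0"
  proof (cases "distinct t")
    case True
    then have "{s \<in> osimplices q. map f s = t} = {}" using osimplex_map nt by auto
    then show ?thesis by (simp only: chain_map_eq_sum[OF c] True if_True sum.empty)
  qed (simp add: chain_map_eq_sum[OF c])
next
  fix t p assume t: "osimplex X adj q t" and p: "p permutes {..<Suc q}"
  let ?F = "\<lambda>u s. if map f s = u then c s else 0"
  have dt: "distinct t" and pt: "p permutes {..<length t}"
    using t p osimplex_distinct[OF t] osimplex_length[OF t] by auto
  have "?F (permute_list p t) (permute_list p s) = of_int (sign p) * ?F t s"
    if s: "s \<in> osimplices q" for s
  proof -
    have ps: "p permutes {..<length s}" using p osimplex_length[of X adj q s] s by auto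
    have "map f (permute_list p s) = permute_list p t \<longleftrightarrow> map f s = t"
      using permute_list_inj[OF ps, of "map f s" t] permute_list_map[OF ps, of f] osimplex_length[OF t]
        osimplex_length[of X adj q s] s by auto
    then show ?thesis using chain_permute_list[OF c ps] by simp
  qed
  then have "(\<Sum>s\<in>osimplices q. ?F (permute_list p t) s) = of_int (sign p) * (\<Sum>s\<in>osimplices q. ?F t s)"
    using sum_osimplices_permute_list[OF p, of "?F (permute_list p t)", symmetric]
    by (simp add: sum_distrib_left)
  then have "(\<Sum>s\<in>{s \<in> osimplices q. map f s = permute_list p t}. c s) =
      of_int (sign p) * (\<Sum>s\<in>{s \<in> osimplices q. map f s = t}. c s)"
    by (simp only: sum.inter_filter[OF finite_osimplices])
  then show "chain_map X adj f q c (permute_list_by p t) = of_int (sign p) * chain_map X adj f q c t"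
    using dt pt unfolding permute_list_by_eq_permute_list chain_map_eq_sum[OF c] by simp
qed

text \<open>Faces whose vertex \<open>f(hd s)\<close> lands on another vertex of the image cancel in pairs:
  swapping \<open>hd s\<close> with the vertex of \<open>tl s\<close> that has the same image reverses the sign.\<close>

lemma sum_folding_simplices_eq_0:
  assumes c: "c \<in> chains X adj (Suc r)"
  shows "(\<Sum>s\<in>{s \<in> osimplices (Suc r). map f (tl s) = t \<and> f (hd s) \<in> set t}. c s) = 0"
proof (rule sum_eq_0_if_sign_reversing_involution)
  let ?A = "{s \<in> osimplices (Suc r). map f (tl s) = t \<and> f (hd s) \<in> set t}"
  define k where "k s = (SOME i. i < length t \<and> t ! i = f (hd s))" for s
  define \<iota> where "\<iota> s = permute_list (Transposition.transpose 0 (Suc (k s))) s" for s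
  have props: "\<iota> s \<in> ?A \<and> \<iota> (\<iota> s) = s \<and> c (\<iota> s) = - c s" if s: "s \<in> ?A" for s
  proof -
    obtain a u where su: "s = a # u" and lu: "length u = Suc r" and mu: "map f u = t"
      and ft: "f a \<in> set t"
      using s osimplex_length[of X adj "Suc r" s] by (cases s) auto
    have k: "k s < length t" "t ! k s = f a"
      unfolding k_def su using someI_ex[of "\<lambda>i. i < length t \<and> t ! i = f a"] ft
      by (auto simp: in_set_conv_nth)
    let ?\<tau> = "Transposition.transpose 0 (Suc (k s))"
    have \<tau>: "?\<tau> permutes {..<length s}"
      using k mu lu su by (intro permutes_swap_id) auto
    have "(map f s) ! 0 = (map f s) ! Suc (k s)"
      using k mu su by auto
    then have map_\<iota>: "map f (\<iota> s) = map f s"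
      using permute_list_map[OF \<tau>, of f] permute_list_transpose_eq[of 0 "map f s" "Suc (k s)"]
        k mu lu su unfolding \<iota>_def by auto
    have "length (\<iota> s) = Suc (Suc r)" using su lu unfolding \<iota>_def by simp
    then have hd_tl: "f (hd (\<iota> s)) = f (hd s)" "map f (tl (\<iota> s)) = map f (tl s)"
      using map_\<iota> su by (cases "\<iota> s"; simp)+
    then have "k (\<iota> s) = k s" unfolding k_def by simp
    then have "\<iota> (\<iota> s) = permute_list (?\<tau> \<circ> ?\<tau>) s"
      using permute_list_compose[OF \<tau>, of ?\<tau>] unfolding \<iota>_def by simp
    moreover have "\<iota> s \<in> ?A"
      using s hd_tl osimplex_permute_list_iff[OF \<tau>] unfolding \<iota>_def by auto
    moreover have "c (\<iota> s) = - c s"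
      using chain_permute_list[OF c \<tau>] unfolding \<iota>_def by (simp add: sign_swap_id)
    ultimately show ?thesis by simp
  qed
  show "\<iota> s \<in> ?A" "\<iota> (\<iota> s) = s" "c (\<iota> s) = - c s" if "s \<in> ?A" for s
    using props[OF that] by simp_all
qed

lemma bdry_chain_map_eq_sum:
  assumes c: "c \<in> chains X adj (Suc r)" and t: "distinct t"
  shows "bdry X adj (Suc r) (chain_map X adj f (Suc r) c) t =
    (\<Sum>s\<in>{s \<in> osimplices (Suc r). map f (tl s) = t \<and> f (hd s) \<notin> set t}. c s)"
proof -
  let ?S = "{s \<in> osimplices (Suc r). map f (tl s) = t \<and> f (hd s) \<notin> set t}"
  have fiber: "{s. s \<in> ?S \<and> f (hd s) = x} = {s \<in> osimplices (Suc r). map f s = x # t}"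
    if "x \<notin> set t" for x
    using that unfolding osimplex_def by (auto simp: length_Suc_conv)
  have hd_in: "(\<lambda>s. f (hd s)) ` ?S \<subseteq> X - set t"
    using cont unfolding osimplex_def dcontinuous_def by (auto simp: length_Suc_conv image_subset_iff)
  have "bdry X adj (Suc r) (chain_map X adj f (Suc r) c) t = (\<Sum>x\<in>X. chain_map X adj f (Suc r) c (x # t))"
    using bdry_eq_sum_cons[OF chain_map_in_chains[OF c]] .
  also have "\<dots> = (\<Sum>x\<in>X - set t. chain_map X adj f (Suc r) c (x # t))"
    using finite_X by (intro sum.mono_neutral_right) (auto simp: chain_map_eq_sum[OF c])
  also have "\<dots> = (\<Sum>x\<in>X - set t. \<Sum>s\<in>{s. s \<in> ?S \<and> f (hd s) = x}. c s)"
  proof (intro sum.cong refl)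
    fix x assume x: "x \<in> X - set t"
    then have xt: "x \<notin> set t" by simp
    have "chain_map X adj f (Suc r) c (x # t) = (\<Sum>s\<in>{s \<in> osimplices (Suc r). map f s = x # t}. c s)"
      using t xt by (simp add: chain_map_eq_sum[OF c])
    then show "chain_map X adj f (Suc r) c (x # t) = (\<Sum>s\<in>{s. s \<in> ?S \<and> f (hd s) = x}. c s)"
      unfolding fiber[OF xt] .
  qed
  also have "\<dots> = (\<Sum>s\<in>?S. c s)"
    using finite_osimplices finite_X hd_in by (intro sum.group) auto
  finally show ?thesis .
qed

lemma chain_map_bdry_eq_sum:
  assumes c: "c \<in> chains X adj (Suc r)" and t: "distinct t"
  shows "chain_map X adj f r (bdry X adj (Suc r) c) t =
    (\<Sum>s\<in>{s \<in> osimplices (Suc r). map f (tl s) = t}. c s)"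
proof -
  let ?S = "{s \<in> osimplices (Suc r). map f (tl s) = t}"
  have tl_in: "tl ` ?S \<subseteq> {u \<in> osimplices r. map f u = t}"
    unfolding osimplex_def by (auto simp: length_Suc_conv)
  have "chain_map X adj f r (bdry X adj (Suc r) c) t =
      (\<Sum>u\<in>{u \<in> osimplices r. map f u = t}. bdry X adj (Suc r) c u)"
    using chain_map_eq_sum[OF bdry_in_chains[OF c]] t by simp
  also have "\<dots> = (\<Sum>u\<in>{u \<in> osimplices r. map f u = t}. \<Sum>s\<in>{s. s \<in> ?S \<and> tl s = u}. c s)"
  proof (intro sum.cong refl)
    fix u assume "u \<in> {u \<in> osimplices r. map f u = t}"
    then have "{s. s \<in> ?S \<and> tl s = u} = {s \<in> osimplices (Suc r). tl s = u}" by auto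
    then show "bdry X adj (Suc r) c u = (\<Sum>s\<in>{s. s \<in> ?S \<and> tl s = u}. c s)"
      using sum_osimplices_tl[OF c, of u] bdry_eq_sum_cons[OF c, of u] by simp
  qed
  also have "\<dots> = (\<Sum>s\<in>?S. c s)"
    using finite_osimplices tl_in by (intro sum.group) auto
  finally show ?thesis .
qed

lemma bdry_chain_map:
  assumes c: "c \<in> chains X adj (Suc r)"
  shows "bdry X adj (Suc r) (chain_map X adj f (Suc r) c) = chain_map X adj f r (bdry X adj (Suc r) c)"
proof
  fix t
  show "bdry X adj (Suc r) (chain_map X adj f (Suc r) c) t = chain_map X adj f r (bdry X adj (Suc r) c) t"
  proof (cases "distinct t")
    case True
    let ?S = "\<lambda>P. {s \<in> osimplices (Suc r). map f (tl s) = t \<and> P (f (hd s) \<in> set t)}"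
    have "{s \<in> osimplices (Suc r). map f (tl s) = t} = ?S (\<lambda>b. \<not> b) \<union> ?S (\<lambda>b. b)"
      by auto
    then have "(\<Sum>s\<in>{s \<in> osimplices (Suc r). map f (tl s) = t}. c s) =
        (\<Sum>s\<in>?S (\<lambda>b. \<not> b). c s) + (\<Sum>s\<in>?S (\<lambda>b. b). c s)"
      using finite_osimplices by (simp add: sum.union_disjoint[symmetric] Int_def)
    then show ?thesis
      using bdry_chain_map_eq_sum[OF c True] chain_map_bdry_eq_sum[OF c True]
        sum_folding_simplices_eq_0[OF c, of t] by simp
  next
    case False
    then show ?thesis
      by (simp add: bdry_eq_sum_cons chain_map_eq_sum c chain_map_in_chains bdry_in_chains)
  qed
qed

lemma chain_map_chains: "chain_map X adj f q ` chains X adj q \<subseteq> chains X adj q"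
  using chain_map_in_chains by auto

lemma chain_map_zero: "chain_map X adj f q ` {\<lambda>_. 0} \<subseteq> {\<lambda>_. 0}"
  using lin_map_zero[OF lin_map_chain_map] by auto

lemma chain_map_cycles: "chain_map X adj f q ` cycles X adj q \<subseteq> cycles X adj q"
proof (cases q)
  case (Suc r)
  then show ?thesis
    unfolding cycles_def
    using chain_map_in_chains bdry_chain_map lin_map_zero[OF lin_map_chain_map] by auto
qed (auto simp: cycles_def chain_map_in_chains)

lemma chain_map_boundaries: "chain_map X adj f q ` boundaries X adj q \<subseteq> boundaries X adj q"
proof
  fix y assume "y \<in> chain_map X adj f q ` boundaries X adj q"
  then obtain a where a: "a \<in> chains X adj (Suc q)" "y = chain_map X adj f q (bdry X adj (Suc q) a)"
    unfolding boundaries_def by auto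
  then show "y \<in> boundaries X adj q"
    unfolding boundaries_def using bdry_chain_map[OF a(1)] chain_map_in_chains[OF a(1)]
    by (metis image_eqI)
qed

lemma quot_trace_chains_split:
  "quot_trace (chains X adj q) {\<lambda>_. 0} (chain_map X adj f q) =
     quot_trace (chains X adj q) (cycles X adj q) (chain_map X adj f q) +
     quot_trace (cycles X adj q) (boundaries X adj q) (chain_map X adj f q) +
     quot_trace (boundaries X adj q) {\<lambda>_. 0} (chain_map X adj f q)"
proof -
  let ?C = "chains X adj q" and ?Z = "cycles X adj q" and ?B = "boundaries X adj q"
    and ?g = "chain_map X adj f q"
  have BC: "?B \<subseteq> ?C" using cycles_subset_chains boundaries_subset_cycles by blast
  obtain hs1 where h1: "quot_basis ?C ?Z hs1"
    using quot_basis_exists_chains[OF lin_subspace_chains lin_subspace_cycles cycles_subset_chains] by blast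
  obtain hs2 where h2: "quot_basis ?Z ?B hs2"
    using quot_basis_exists_chains[OF lin_subspace_cycles lin_subspace_boundaries
        boundaries_subset_cycles cycles_subset_chains] by blast
  obtain hs3 where h3: "quot_basis ?B {\<lambda>_. 0} hs3"
    using quot_basis_exists_chains[OF lin_subspace_boundaries lin_subspace_singleton_zero
        zero_in_boundaries BC] by blast
  have h12: "quot_basis ?C ?B (hs1 @ hs2)"
    by (rule quot_basis_append(1)[OF lin_subspace_boundaries lin_subspace_cycles
          boundaries_subset_cycles cycles_subset_chains h1 h2])
  have "quot_trace ?C {\<lambda>_. 0} ?g = quot_trace ?C ?B ?g + quot_trace ?B {\<lambda>_. 0} ?g"
    by (rule quot_trace_split[OF lin_subspace_singleton_zero lin_subspace_boundaries zero_in_boundaries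
          BC h12 h3 lin_map_chain_map chain_map_chains chain_map_boundaries chain_map_zero])
  moreover have "quot_trace ?C ?B ?g = quot_trace ?C ?Z ?g + quot_trace ?Z ?B ?g"
    by (rule quot_trace_split[OF lin_subspace_boundaries lin_subspace_cycles boundaries_subset_cycles
          cycles_subset_chains h1 h2 lin_map_chain_map chain_map_chains chain_map_cycles
          chain_map_boundaries])
  ultimately show ?thesis by simp
qed

lemma quot_trace_chains_cycles_0:
  "quot_trace (chains X adj 0) (cycles X adj 0) (chain_map X adj f 0) = 0"
  using quot_trace_self[OF lin_subspace_chains lin_map_chain_map chain_map_chains]
  by (simp add: cycles_def)

lemma quot_trace_chains_cycles_Suc:
  "quot_trace (chains X adj (Suc r)) (cycles X adj (Suc r)) (chain_map X adj f (Suc r)) =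
   quot_trace (boundaries X adj r) {\<lambda>_. 0} (chain_map X adj f r)"
proof -
  obtain hs where "quot_basis (chains X adj (Suc r)) (cycles X adj (Suc r)) hs"
    using quot_basis_exists_chains[OF lin_subspace_chains lin_subspace_cycles cycles_subset_chains]
    by blast
  then show ?thesis
    unfolding boundaries_def
    by (rule quot_trace_transport[OF lin_subspace_chains lin_subspace_cycles
          lin_subspace_singleton_zero cycles_subset_chains _ lin_map_bdry _ lin_map_chain_map
          chain_map_chains chain_map_cycles lin_map_chain_map chain_map_zero, symmetric])
      (auto simp: cycles_def bdry_chain_map)
qed

lemma lefschetz_eq_alternating_trace_chains:
  "lefschetz X adj f =
    (\<Sum>q<card X. (-1) ^ q * quot_trace (chains X adj q) {\<lambda>_. 0} (chain_map X adj f q))"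
proof (cases "card X")
  case (Suc m)
  define c where "c q = quot_trace (chains X adj q) {\<lambda>_. 0} (chain_map X adj f q)" for q
  define e where "e q = quot_trace (chains X adj q) (cycles X adj q) (chain_map X adj f q)" for q
  define b where "b q = quot_trace (boundaries X adj q) {\<lambda>_. 0} (chain_map X adj f q)" for q
  have e_b: "e 0 = 0" "e (Suc q) = b q" for q
    unfolding e_def b_def by (simp_all only: quot_trace_chains_cycles_0 quot_trace_chains_cycles_Suc)
  have "b m = 0"
    unfolding b_def boundaries_top[OF Suc]
    by (rule quot_trace_self[OF lin_subspace_singleton_zero lin_map_chain_map chain_map_zero])
  then have "(\<Sum>q<Suc m. (-1) ^ q * b q) = (\<Sum>q<m. (-1) ^ q * b q)"
    by simp
  moreover have "(\<Sum>q<Suc m. (-1) ^ q * e q) = - (\<Sum>q<m. (-1) ^ q * b q)"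
    unfolding sum.lessThan_Suc_shift by (simp add: e_b sum_negf)
  ultimately have telescope: "(\<Sum>q<Suc m. (-1) ^ q * (e q + b q)) = 0"
    by (simp add: distrib_left sum.distrib)
  have homology: "quot_trace (cycles X adj q) (boundaries X adj q) (chain_map X adj f q) = c q - (e q + b q)"
    for q unfolding c_def e_def b_def quot_trace_chains_split by simp
  have "lefschetz X adj f = (\<Sum>q<Suc m. (-1) ^ q * (c q - (e q + b q)))"
    unfolding lefschetz_def Suc homology ..
  also have "\<dots> = (\<Sum>q<Suc m. (-1) ^ q * c q) - (\<Sum>q<Suc m. (-1) ^ q * (e q + b q))"
    by (simp add: right_diff_distrib sum_subtractf)
  finally show ?thesis
    unfolding telescope Suc c_def by simp
qed (simp add: lefschetz_def)

lemma quot_trace_chain_map_eq_0: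
  assumes no_fixed: "\<And>\<sigma>. is_simplex X adj \<sigma> \<Longrightarrow> f ` \<sigma> \<noteq> \<sigma>"
  shows "quot_trace (chains X adj q) {\<lambda>_. 0} (chain_map X adj f q) = 0"
proof -
  obtain vs where vs: "simplex_reps q vs" using simplex_reps_exist by blast
  have "chain_map X adj f q (gen v) v = 0" if v: "osimplex X adj q v" for v
  proof -
    have "gen v s = 0" if s: "s \<in> osimplices q" "map f s = v" for s
    proof (rule ccontr)
      assume "gen v s \<noteq> 0"
      then have "f ` set v = set v"
        using set_eq_if_gen_nonzero s(2) by (metis list.set_map)
      moreover have "is_simplex X adj (set v)"
        using v unfolding is_simplex_def osimplex_def by auto
      ultimately show False using no_fixed by blast
    qed
    then show ?thesis
      using osimplex_distinct[OF v] by (simp add: chain_map_eq_sum[OF gen_in_chains[OF v]])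
  qed
  then show ?thesis
    using quot_trace_chains_eq_sum_reps[OF vs lin_map_chain_map chain_map_chains] vs
    unfolding simplex_reps_def by simp
qed

end

theorem theorem3p3:
  fixes X :: "'a set" and adj :: "'a \<Rightarrow> 'a \<Rightarrow> bool" and f :: "'a \<Rightarrow> 'a"
  assumes "finite X" and "digital_image X adj" and "dcontinuous X adj f"
    and "lefschetz X adj f \<noteq> 0"
  shows "\<exists>\<sigma>. is_simplex X adj \<sigma> \<and> f ` \<sigma> = \<sigma>"
proof (rule ccontr)
  interpret finite_self_map X adj f
    using assms(1,3) by unfold_locales
  assume "\<nexists>\<sigma>. is_simplex X adj \<sigma> \<and> f ` \<sigma> = \<sigma>"
  then have "quot_trace (chains X adj q) {\<lambda>_. 0} (chain_map X adj f q) = 0" for q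
    using quot_trace_chain_map_eq_0 by blast
  then have "lefschetz X adj f = 0"
    unfolding lefschetz_eq_alternating_trace_chains by simp
  then show False using assms(4) by simp
qed

end
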